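(* Let $\mathcal D$ be a nonempty set and write $\mathcal P=\mathrm{Prim}(\mathcal H^{\mathcal D}_{P,R})$. (1) Let $(P_t)$ be a family of elements of $\mathcal P$ indexed by the decorated planar rooted trees $t$. Let $\Phi_{(P_t)}$ be the unique algebra endomorphism of $\mathcal H^{\mathcal D}_{P,R}$ defined recursively on the weight by $\Phi_{(P_t)}(\bullet_d)=P_{\bullet_d}$ and, for every tree $t$ with $\tilde\Delta(t)=\sum t'\otimes t''$ (the $t''$ being trees), $$\Phi_{(P_t)}(t)=\Big(\sum\Phi_{(P_t)}(t')\top P_{t''}\Big)+P_t.$$ Then $\Phi_{(P_t)}$ is a bialgebra endomorphism of $\mathcal H^{\mathcal D}_{P,R}$. (2) For every bialgebra endomorphism $\Phi$ of $\mathcal H^{\mathcal D}_{P,R}$ there exists a unique family $(P_t)$ of primitive elements indexed by decorated planar rooted trees with $\Phi=\Phi_{(P_t)}$.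
   Context: $\mathcal H^{\mathcal D}_{P,R}$ is the free associative unital $\mathbb Q$-algebra on the set of planar rooted trees (finite trees with a root, embedded in the plane, edges oriented away from the root) decorated by $\mathcal D$, with basis the planar forests $t_1\cdots t_n$ ($1$ = empty forest), graded by number of vertices, coproduct $\Delta(F)=\sum_cP^c(F)\otimes R^c(F)$ over tuples $c=(c_i)$, each $c_i$ the empty cut of $t_i$ ($P=1,R=t_i$), the total cut ($P=t_i,R=1$), or an admissible cut (a nonempty set of edges such that every oriented path meets at most one of them; $R^{c_i}(t_i)$ the component of the root, $P^{c_i}(t_i)$ the left-to-right planar forest of the other components), $P^c(F)=\prod P^{c_i}(t_i)$, $R^c(F)=\prod R^{c_i}(t_i)$, counit $\varepsilon(F)=0$ for $F\neq1$; $\tilde\Delta(x)=\Delta(x)-x\otimes1-1\otimes x$. $B_d^+$ grafts a forest (in order) on a new root decorated by $d$, $\bullet_d=B_d^+(1)$, and $\gamma_d$ is the linear map with $\gamma_d(1)=0$, $\gamma_d(t_1\cdots t_n)=t_1\cdots t_{n-1}$ if $t_n=\bullet_d$, $0$ otherwise. There is a unique bilinear form $(\,,\,)$ with $(1,x)=\varepsilon(x)$, $(x_1x_2,y)=(x_1\otimes x_2,\Delta(y))$, $(B_d^+(x),y)=(x,\gamma_d(y))$, and a basis $(e_F)$ indexed by forests with $(e_F,G)=\delta_{F,G}$; $(e_t)_{t\text{ tree}}$ is a basis of $\mathcal P$. Define $\top$ multilinearly on $\mathcal P$ by $e_{t_1}\top\cdots\top e_{t_n}=e_{t_1\cdots t_n}$;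 the maps $p_1\otimes\cdots\otimes p_n\mapsto p_1\top\cdots\top p_n$ give $\mathcal H^{\mathcal D}_{P,R}=\bigoplus_n\mathcal P^{\top n}$ (with $\mathcal P^{\top0}=\mathbb Q1$). For $x\in\mathcal H^{\mathcal D}_{P,R}$ and $p\in\mathcal P$, $x\top p$ is the linear extension of $1\top p=p$, $(p_1\top\cdots\top p_k)\top p=p_1\top\cdots\top p_k\top p$. *)

theory Defs
  imports Complex_Main
begin

text \<open>Decorations are the elements of the type 'd (a nonempty set, as every type is).
A planar rooted tree is a root decorated by d with an ordered list of subtrees;
a planar forest is a list of trees (the empty list is the empty forest 1).\<close>

datatype 'd ptree = Node 'd "'d ptree list"

type_synonym 'd forest = "'d ptree list"

text \<open>Elements of H are finitely supported rational coefficient functions on forests;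
elements of H (x) H are coefficient functions on pairs of forests.\<close>
type_synonym 'd hvec = "'d forest \<Rightarrow> rat"
type_synonym 'd tvec = "'d forest \<times> 'd forest \<Rightarrow> rat"

fun nv :: "'d ptree \<Rightarrow> nat" where
  "nv (Node d ts) = Suc (sum_list (map nv ts))"

definition nvF :: "'d forest \<Rightarrow> nat" where
  "nvF F = sum_list (map nv F)"

text \<open>cuts t lists the pairs (P^c(t), R^c(t)) over all cuts c of t: the total cut first,
then, for every choice of a cut of each subtree (where the total cut of a subtree means
cutting the edge from the root to it), the resulting cut of t (this enumerates the empty
cut and all admissible cuts exactly once).\<close>
fun cuts :: "'d ptree \<Rightarrow> ('d forest \<times> 'd forest) list" where
  "cuts (Node d ts) = ([Node d ts], []) #
     map (\<lambda>ps. (concat (map fst ps), [Node d (concat (map snd ps))])) (product_lists (map cuts ts))"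

text \<open>Delta(t_1...t_n) = sum over tuples of cuts of (prod P^{c_i}(t_i)) (x) (prod R^{c_i}(t_i)),
as a list of terms (with multiplicity).\<close>
definition deltaList :: "'d forest \<Rightarrow> ('d forest \<times> 'd forest) list" where
  "deltaList F = map (\<lambda>ps. (concat (map fst ps), concat (map snd ps))) (product_lists (map cuts F))"

lemma cuts_nv: "ab \<in> set (cuts t) \<Longrightarrow> nvF (fst ab) + nvF (snd ab) = nv t"
proof (induction t arbitrary: ab)
  case (Node d ts)
  show ?case
  proof (cases "ab = ([Node d ts], [])")
    case True then show ?thesis by (simp add: nvF_def)
  next
    case False
    with Node.prems obtain ps where ps: "ps \<in> set (product_lists (map cuts ts))"
      and ab: "ab = (concat (map fst ps), [Node d (concat (map snd ps))])" by auto
    from ps have l: "list_all2 (\<lambda>x ys. x \<in> set ys) ps (map cuts ts)"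
      by (simp add: product_lists_set)
    have "\<forall>i<length ts. nvF (fst (ps!i)) + nvF (snd (ps!i)) = nv (ts!i)"
    proof (intro allI impI)
      fix i assume i: "i < length ts"
      with l have "ps!i \<in> set (cuts (ts!i))" by (auto simp: list_all2_conv_all_nth)
      then show "nvF (fst (ps!i)) + nvF (snd (ps!i)) = nv (ts!i)"
        using Node.IH[of "ts!i"] i by auto
    qed
    have len: "length ps = length ts" using l list_all2_lengthD by fastforce
    have gen: "\<And>ps. length ps = length ts \<Longrightarrow>
       (\<forall>i<length ts. nvF (fst (ps!i)) + nvF (snd (ps!i)) = nv (ts!i)) \<Longrightarrow>
       nvF (concat (map fst ps)) + nvF (concat (map snd ps)) = sum_list (map nv ts)"
      for ts :: "'a ptree list"
    proof (induction ts)
      case Nil then show ?case by (simp add: nvF_def)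
    next
      case (Cons t ts')
      then obtain p ps' where pp: "ps = p # ps'"
        by (cases ps) auto
      with Cons.prems have h1: "nvF (fst p) + nvF (snd p) = nv t"
        and h2: "\<forall>i<length ts'. nvF (fst (ps'!i)) + nvF (snd (ps'!i)) = nv (ts'!i)"
        and h3: "length ps' = length ts'" by auto
      from Cons.IH[OF h3 h2] h1 pp show ?case
        by (simp add: nvF_def)
    qed
    have "nvF (concat (map fst ps)) + nvF (concat (map snd ps)) = sum_list (map nv ts)"
      by (rule gen[OF len]) (use \<open>\<forall>i<length ts. _\<close> in blast)
    then show ?thesis using ab by (simp add: nvF_def)
  qed
qed

definition fin_supp :: "'d hvec \<Rightarrow> bool" where
  "fin_supp x \<longleftrightarrow> finite {F. x F \<noteq> 0}"

definition unitH :: "'d hvec" where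
  "unitH = (\<lambda>G. if G = [] then 1 else 0)"

text \<open>Product: bilinear extension of concatenation of forests.\<close>
definition multH :: "'d hvec \<Rightarrow> 'd hvec \<Rightarrow> 'd hvec" where
  "multH x y = (\<lambda>G. \<Sum>i\<le>length G. x (take i G) * y (drop i G))"

definition deltaH :: "'d hvec \<Rightarrow> 'd tvec" where
  "deltaH x = (\<lambda>(A, B). \<Sum>F\<in>{F. x F \<noteq> 0}. x F * of_nat (count_list (deltaList F) (A, B)))"

definition counitH :: "'d hvec \<Rightarrow> rat" where
  "counitH x = x []"

definition prim :: "'d hvec \<Rightarrow> bool" where
  "prim x \<longleftrightarrow> fin_supp x \<and>
     deltaH x = (\<lambda>(A, B). (if B = [] then x A else 0) + (if A = [] then x B else 0))"

text \<open>The pairing (F, G) on basis forests, computed from the defining rules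
(1, G) = eps(G), (t F', G) = (t (x) F', Delta G) and (B_d^+(ts), A) = (ts, gamma_d(A)).\<close>
fun pair :: "'d forest \<Rightarrow> 'd forest \<Rightarrow> rat" where
  "pair [] G = (if G = [] then 1 else 0)"
| "pair (Node d ts # F) G =
     sum_list (map (\<lambda>ab. (if fst ab \<noteq> [] \<and> last (fst ab) = Node d []
                          then pair ts (butlast (fst ab)) else 0) * pair F (snd ab))
                   (deltaList G))"

definition pairH :: "'d hvec \<Rightarrow> 'd forest \<Rightarrow> rat" where
  "pairH x G = (\<Sum>F\<in>{F. x F \<noteq> 0}. x F * pair F G)"

definition eb :: "'d forest \<Rightarrow> 'd hvec" where
  "eb F = (THE x. fin_supp x \<and> (\<forall>G. pairH x G = (if G = F then 1 else 0)))"

text \<open>x top p: writing x = sum_F (x,F) e_F and p = sum_t (p,t) e_t, 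
x top p = sum_{F,t} (x,F) (p,t) e_{F t}.\<close>
definition topH :: "'d hvec \<Rightarrow> 'd hvec \<Rightarrow> 'd hvec" where
  "topH x p = (\<lambda>G. \<Sum>Ft\<in>{F. pairH x F \<noteq> 0} \<times> {t. pairH p [t] \<noteq> 0}.
                     pairH x (fst Ft) * pairH p [snd Ft] * eb (fst Ft @ [snd Ft]) G)"

text \<open>phiF P F is the value of Phi_(P_t) on the forest F; it is multiplicative by
construction and on a tree t it is sum over tilde-Delta(t) of Phi(t') top P_{t''} plus P_t.\<close>
function phiF :: "('d ptree \<Rightarrow> 'd hvec) \<Rightarrow> 'd forest \<Rightarrow> 'd hvec" where
  "phiF P [] = unitH"
| "phiF P (t # F) = multH
     (\<lambda>G. sum_list (map (\<lambda>ab. if fst ab \<noteq> [] \<and> snd ab \<noteq> []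
                               then topH (phiF P (fst ab)) (P (hd (snd ab))) G else 0) (cuts t))
          + P t G)
     (phiF P F)"
  by pat_completeness auto
termination
proof (relation "measure (\<lambda>(P, F). nvF F)")
  show "wf (measure (\<lambda>(P, F). nvF F))" by simp
next
  fix P :: "'d ptree \<Rightarrow> 'd hvec" and t F
  show "((P, F), P, t # F) \<in> measure (\<lambda>(P, F). nvF F)"
    by (cases t) (simp add: nvF_def)
next
  fix P :: "'d ptree \<Rightarrow> 'd hvec" and t F G ab
  assume ab: "ab \<in> set (cuts t)" and ne: "fst ab \<noteq> [] \<and> snd ab \<noteq> []"
  have "nvF (fst ab) + nvF (snd ab) = nv t" by (rule cuts_nv[OF ab])
  moreover from ne obtain s S where "snd ab = s # S" by (cases "snd ab") auto
  moreover have "nv s > 0" by (cases s) auto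
  ultimately have "nvF (fst ab) < nv t" by (simp add: nvF_def)
  then show "((P, fst ab), P, t # F) \<in> measure (\<lambda>(P, F). nvF F)" by (simp add: nvF_def)
qed

text \<open>A linear endomorphism is given by its values on the basis of forests.\<close>
definition bialg_endo :: "('d forest \<Rightarrow> 'd hvec) \<Rightarrow> bool" where
  "bialg_endo \<Phi> \<longleftrightarrow>
     (\<forall>F. fin_supp (\<Phi> F)) \<and>
     \<Phi> [] = unitH \<and>
     (\<forall>F G. \<Phi> (F @ G) = multH (\<Phi> F) (\<Phi> G)) \<and>
     (\<forall>F. deltaH (\<Phi> F) = (\<lambda>(C, D). sum_list (map (\<lambda>ab. \<Phi> (fst ab) C * \<Phi> (snd ab) D) (deltaList F)))) \<and>
     (\<forall>F. counitH (\<Phi> F) = (if F = [] then 1 else 0))"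

end

(*
  Order forests by the depth words of their vertices. Every forest F pairs to 1 with
  an explicit forest max_partner F and to 0 with every forest of larger depth word, so
  the pairing is unitriangular, hence nondegenerate, and the dual basis e_F exists. Elements and tensors can therefore be compared through their pairings with
  forests, and in these coordinates (x top p, G t) = (x, G) (p, t).

  An algebra map Phi commutes with the coproduct on a forest F iff
  (Phi F, X Y) = sum over Delta F of (Phi F', X) (Phi F'', Y) for all X, Y, and this
  property is stable under concatenation. For a tree t, assume it for all smaller
  weights. Expanding (Phi t' top P t'', X Y) by the induction hypothesis and regrouping
  with coassociativity shows that the grafting part of Phi t, the sum over admissible
  cuts of Phi t' top P t'', has reduced coproduct sum Phi t' (x) Phi t''. So Phi
  commutes with the coproduct on t iff the remainder P t is primitive. Induction on the
  weight gives (1); reading the recursion backwards, P t = Phi t - (grafting part),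
  defines the unique family of (2).
*)
theory Submission
  imports Defs "HOL-Library.List_Lexorder"
begin

definition tensor_list :: "('a list \<times> 'a list) list \<Rightarrow> ('a list \<times> 'a list) list \<Rightarrow> ('a list \<times> 'a list) list" where
  "tensor_list L M = concat (map (\<lambda>(a,b). map (\<lambda>(c,d). (a@c, b@d)) M) L)"

lemma deltaList_Nil[simp]: "deltaList [] = [([],[])]"
  by (simp add: deltaList_def)

lemma deltaList_Cons: "deltaList (t#F) = tensor_list (cuts t) (deltaList F)"
  by (simp add: deltaList_def tensor_list_def map_concat comp_def split_def)

lemma cuts_Node: "cuts (Node e ts) = ([Node e ts],[]) # map (\<lambda>(a,b). (a,[Node e b])) (deltaList ts)"
  by (simp add: deltaList_def comp_def case_prod_beta)

declare cuts.simps[simp del]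

lemma tensor_list_Nil_left[simp]: "tensor_list [([],[])] M = M"
  by (simp add: tensor_list_def case_prod_beta)

lemma tensor_list_Nil_right[simp]: "tensor_list L [([],[])] = L"
  by (induction L) (auto simp: tensor_list_def)

lemma deltaList_single: "deltaList [t] = cuts t"
  by (simp add: deltaList_Cons)

lemma tensor_list_assoc: "tensor_list (tensor_list L M) N = tensor_list L (tensor_list M N)"
  by (induction L) (auto simp: tensor_list_def map_concat comp_def split_def)

lemma deltaList_append: "deltaList (F@G) = tensor_list (deltaList F) (deltaList G)"
  by (induction F) (simp_all add: deltaList_Cons tensor_list_assoc)

lemma sum_list_concat: "sum_list (concat xss) = sum_list (map sum_list xss)"
  by (induction xss) auto

lemma sum_list_tensor_list:
  "sum_list (map f (tensor_list L M)) = sum_list (map (\<lambda>(a,b). sum_list (map (\<lambda>(c,d). f (a@c,b@d)) M)) L)"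
  by (simp add: tensor_list_def sum_list_concat map_concat comp_def split_def)

lemma set_tensor_list: "set (tensor_list L M) = {(a@c, b@d) | a b c d. (a,b) \<in> set L \<and> (c,d) \<in> set M}"
proof
  show "set (tensor_list L M) \<subseteq> {(a@c, b@d) | a b c d. (a,b) \<in> set L \<and> (c,d) \<in> set M}"
    by (auto simp: tensor_list_def)
  show "{(a@c, b@d) | a b c d. (a,b) \<in> set L \<and> (c,d) \<in> set M} \<subseteq> set (tensor_list L M)"
    unfolding tensor_list_def by (auto intro!: bexI[where x="(_,_)"] simp: image_iff)
qed

lemma sum_list_swap:
  fixes f :: "'a \<Rightarrow> 'b \<Rightarrow> 'c::comm_monoid_add"
  shows "(\<Sum>x\<leftarrow>xs. \<Sum>y\<leftarrow>ys. f x y) = (\<Sum>y\<leftarrow>ys. \<Sum>x\<leftarrow>xs. f x y)"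
  by (induction xs) (simp_all add: sum_list_addf)

lemma sum_list_cuts_Node:
  "(\<Sum>ab\<leftarrow>cuts (Node e ts). f ab) = f ([Node e ts],[]) + (\<Sum>(a,b)\<leftarrow>deltaList ts. f (a,[Node e b]))"
  by (simp add: cuts_Node comp_def split_def)

lemma nvF_append[simp]: "nvF (a@b) = nvF a + nvF b"
  by (simp add: nvF_def)
lemma nvF_Cons[simp]: "nvF (t#F) = nv t + nvF F"
  by (simp add: nvF_def)
lemma nvF_Nil[simp]: "nvF [] = 0"
  by (simp add: nvF_def)
lemma nv_Node[simp]: "nv (Node e ts) = Suc (nvF ts)"
  by (simp add: nvF_def)
declare nv.simps[simp del]

lemma nv_pos: "nv t > 0"
  by (cases t) auto

lemma deltaList_nv: "ab \<in> set (deltaList F) \<Longrightarrow> nvF (fst ab) + nvF (snd ab) = nvF F"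
proof (induction F arbitrary: ab)
  case Nil then show ?case by simp
next
  case (Cons t F)
  then obtain a b c d where ab: "ab = (a@c, b@d)" and 1: "(a,b) \<in> set (cuts t)" and 2: "(c,d) \<in> set (deltaList F)"
    by (auto simp: deltaList_Cons set_tensor_list)
  from cuts_nv[OF 1] Cons.IH[OF 2] show ?case by (simp add: ab)
qed

lemma nvF_less_induct:
  assumes "\<And>F. (\<And>G. nvF G < nvF F \<Longrightarrow> P G) \<Longrightarrow> P F"
  shows "P F"
  using assms by (induction "nvF F" arbitrary: F rule: less_induct) blast

lemma cuts_Node_set: "ab \<in> set (cuts (Node e ts)) \<longleftrightarrow>
   ab = ([Node e ts],[]) \<or> (\<exists>a b. ab = (a,[Node e b]) \<and> (a,b) \<in> set (deltaList ts))"
  by (auto simp: cuts_Node)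

lemma deltaList_Cons_set: "(P,R) \<in> set (deltaList (t#F)) \<longleftrightarrow>
   (\<exists>a b c d. P = a@c \<and> R = b@d \<and> (a,b) \<in> set (cuts t) \<and> (c,d) \<in> set (deltaList F))"
  by (auto simp: deltaList_Cons set_tensor_list)

lemma deltaList_append_set: "(P,R) \<in> set (deltaList (F@G)) \<longleftrightarrow>
   (\<exists>a b c d. P = a@c \<and> R = b@d \<and> (a,b) \<in> set (deltaList F) \<and> (c,d) \<in> set (deltaList G))"
  by (auto simp: deltaList_append set_tensor_list)

definition coassociative :: "('d forest \<times> 'd forest) list \<Rightarrow> bool" where
  "coassociative L \<longleftrightarrow> (\<forall>g :: 'd forest \<Rightarrow> 'd forest \<Rightarrow> 'd forest \<Rightarrow> rat.
     (\<Sum>(a,b)\<leftarrow>L. \<Sum>(x,y)\<leftarrow>deltaList a. g x y b) = (\<Sum>(a,b)\<leftarrow>L. \<Sum>(x,y)\<leftarrow>deltaList b. g a x y))"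

lemma coassociative_cuts_Node:
  fixes ts :: "'d forest"
  assumes "coassociative (deltaList ts)"
  shows "coassociative (cuts (Node e ts))"
  unfolding coassociative_def
proof
  fix h :: "'d forest \<Rightarrow> 'd forest \<Rightarrow> 'd forest \<Rightarrow> rat"
  let ?t = "Node e ts"
  have "(\<Sum>(a,b)\<leftarrow>cuts ?t. \<Sum>(x,y)\<leftarrow>deltaList a. h x y b)
      = (\<Sum>(x,y)\<leftarrow>cuts ?t. h x y []) + (\<Sum>(a,b)\<leftarrow>deltaList ts. \<Sum>(x,y)\<leftarrow>deltaList a. h x y [Node e b])"
    by (simp add: sum_list_cuts_Node deltaList_single split_def)
  also have "(\<Sum>(a,b)\<leftarrow>deltaList ts. \<Sum>(x,y)\<leftarrow>deltaList a. h x y [Node e b])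
      = (\<Sum>(a,b)\<leftarrow>deltaList ts. \<Sum>(x,y)\<leftarrow>deltaList b. h a x [Node e y])"
    using assms[unfolded coassociative_def, rule_format, of "\<lambda>x y b. h x y [Node e b]"] by simp
  also have "(\<Sum>(x,y)\<leftarrow>cuts ?t. h x y []) = h [?t] [] [] + (\<Sum>(a,b)\<leftarrow>deltaList ts. h a [Node e b] [])"
    by (simp add: sum_list_cuts_Node split_def)
  also have "h [?t] [] [] + (\<Sum>(a,b)\<leftarrow>deltaList ts. h a [Node e b] [])
      + (\<Sum>(a,b)\<leftarrow>deltaList ts. \<Sum>(x,y)\<leftarrow>deltaList b. h a x [Node e y])
      = h [?t] [] [] + (\<Sum>(a,b)\<leftarrow>deltaList ts. \<Sum>(x,y)\<leftarrow>cuts (Node e b). h a x y)"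
    by (simp add: sum_list_cuts_Node split_def sum_list_addf add.assoc)
  also have "\<dots> = (\<Sum>(a,b)\<leftarrow>cuts ?t. \<Sum>(x,y)\<leftarrow>deltaList b. h a x y)"
    by (simp add: sum_list_cuts_Node deltaList_single split_def)
  finally show "(\<Sum>(a,b)\<leftarrow>cuts ?t. \<Sum>(x,y)\<leftarrow>deltaList a. h x y b)
      = (\<Sum>(a,b)\<leftarrow>cuts ?t. \<Sum>(x,y)\<leftarrow>deltaList b. h a x y)" .
qed

lemma coassociative_tensor_list:
  fixes L M :: "('d forest \<times> 'd forest) list"
  assumes L: "coassociative L" and M: "coassociative M"
  shows "coassociative (tensor_list L M)"
  unfolding coassociative_def
proof
  fix g :: "'d forest \<Rightarrow> 'd forest \<Rightarrow> 'd forest \<Rightarrow> rat"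
  have "(\<Sum>(a,b)\<leftarrow>tensor_list L M. \<Sum>(x,y)\<leftarrow>deltaList a. g x y b)
     = (\<Sum>(a1,b1)\<leftarrow>L. \<Sum>(x1,y1)\<leftarrow>deltaList a1. \<Sum>(a2,b2)\<leftarrow>M. \<Sum>(x2,y2)\<leftarrow>deltaList a2. g (x1@x2) (y1@y2) (b1@b2))"
    by (simp add: sum_list_tensor_list deltaList_append split_def sum_list_swap[of _ M])
  also have "\<dots> = (\<Sum>(a1,b1)\<leftarrow>L. \<Sum>(x1,y1)\<leftarrow>deltaList a1. \<Sum>(a2,b2)\<leftarrow>M. \<Sum>(x2,y2)\<leftarrow>deltaList b2. g (x1@a2) (y1@x2) (b1@y2))"
    using M[unfolded coassociative_def, rule_format, of "\<lambda>x2 y2 b2. g (_ @ x2) (_ @ y2) (_ @ b2)", unfolded split_def]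
    by (simp add: split_def)
  also have "\<dots> = (\<Sum>(a1,b1)\<leftarrow>L. \<Sum>(x1,y1)\<leftarrow>deltaList b1. \<Sum>(a2,b2)\<leftarrow>M. \<Sum>(x2,y2)\<leftarrow>deltaList b2. g (a1@a2) (x1@x2) (y1@y2))"
    using L[unfolded coassociative_def, rule_format,
        of "\<lambda>x1 y1 b1. \<Sum>(a2,b2)\<leftarrow>M. \<Sum>(x2,y2)\<leftarrow>deltaList b2. g (x1@a2) (y1@x2) (b1@y2)"]
    by simp
  also have "\<dots> = (\<Sum>(a,b)\<leftarrow>tensor_list L M. \<Sum>(x,y)\<leftarrow>deltaList b. g a x y)"
    by (simp add: sum_list_tensor_list deltaList_append split_def sum_list_swap[of _ M])
  finally show "(\<Sum>(a,b)\<leftarrow>tensor_list L M. \<Sum>(x,y)\<leftarrow>deltaList a. g x y b)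
     = (\<Sum>(a,b)\<leftarrow>tensor_list L M. \<Sum>(x,y)\<leftarrow>deltaList b. g a x y)" .
qed

lemma coassociative_deltaList: "coassociative (deltaList F)"
proof (induction F rule: nvF_less_induct)
  case (1 F)
  show ?case
  proof (cases F)
    case Nil then show ?thesis by (simp add: coassociative_def)
  next
    case (Cons t F')
    obtain e ts where t: "t = Node e ts" by (cases t)
    have "coassociative (cuts t)"
      unfolding t by (rule coassociative_cuts_Node) (use 1 Cons t in simp)
    moreover have "coassociative (deltaList F')" using 1 Cons by (simp add: nv_pos)
    ultimately show ?thesis by (simp add: Cons deltaList_Cons coassociative_tensor_list)
  qed
qed

lemma deltaList_coassoc:
  fixes g :: "'d forest \<Rightarrow> 'd forest \<Rightarrow> 'd forest \<Rightarrow> rat"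
  shows "(\<Sum>(a,b)\<leftarrow>deltaList F. \<Sum>(x,y)\<leftarrow>deltaList a. g x y b)
 = (\<Sum>(a,b)\<leftarrow>deltaList F. \<Sum>(x,y)\<leftarrow>deltaList b. g a x y)"
  using coassociative_deltaList[of F] by (simp add: coassociative_def)

lemma deltaList_right_Nil: "(a,[]) \<in> set (deltaList F) \<Longrightarrow> a = F"
proof (induction F arbitrary: a)
  case Nil then show ?case by simp
next
  case (Cons t F)
  then obtain a1 c where "a = a1@c" "(a1,[]) \<in> set (cuts t)" "(c,[]) \<in> set (deltaList F)"
    by (auto simp: deltaList_Cons_set)
  moreover obtain e ts where "t = Node e ts" by (cases t)
  ultimately show ?case using Cons.IH by (auto simp: cuts_Node_set)
qed

lemma deltaList_left_Nil: "([],b) \<in> set (deltaList F) \<Longrightarrow> b = F"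
proof (induction F arbitrary: b rule: nvF_less_induct)
  case (1 F)
  show ?case
  proof (cases F)
    case Nil then show ?thesis using "1.prems" by simp
  next
    case (Cons t F')
    obtain e ts where t: "t = Node e ts" by (cases t)
    from 1(2) Cons obtain b1 d where b: "b = b1@d" and c1: "([],b1) \<in> set (cuts t)" and c2: "([],d) \<in> set (deltaList F')"
      by (auto simp: deltaList_Cons_set)
    from c1 t obtain r where "b1 = [Node e r]" "([],r) \<in> set (deltaList ts)"
      by (auto simp: cuts_Node_set)
    with 1(1)[of ts] 1(1)[of F'] c2 show ?thesis using Cons t b by (simp add: nv_pos)
  qed
qed

lemma sum_deltaList_right_Nil:
  fixes f :: "'d forest \<Rightarrow> 'c::comm_monoid_add"
  shows "(\<Sum>(a,b)\<leftarrow>deltaList F. if b = [] then f a else 0) = f F"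
proof (induction F arbitrary: f)
  case Nil then show ?case by simp
next
  case (Cons t F)
  obtain e ts where t: "t = Node e ts" by (cases t)
  have "(\<Sum>(a,b)\<leftarrow>deltaList (t#F). if b = [] then f a else 0)
     = (\<Sum>(a1,b1)\<leftarrow>cuts t. \<Sum>(a2,b2)\<leftarrow>deltaList F. if b1@b2 = [] then f (a1@a2) else 0)"
    unfolding deltaList_Cons sum_list_tensor_list by (simp add: split_def cong: if_cong)
  also have "\<dots> = (\<Sum>(a1,b1)\<leftarrow>cuts t. if b1 = [] then (\<Sum>(a2,b2)\<leftarrow>deltaList F. if b2 = [] then f (a1@a2) else 0) else 0)"
    by (rule arg_cong[where f=sum_list], rule map_cong) (auto simp: split_def)
  also have "\<dots> = (\<Sum>(a1,b1)\<leftarrow>cuts t. if b1 = [] then f (a1@F) else 0)"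
    using Cons.IH[of "\<lambda>a2. f (_ @ a2)"] by (simp add: split_def cong: if_cong)
  also have "\<dots> = f (t#F)"
    by (simp add: t sum_list_cuts_Node split_def)
  finally show ?case .
qed

lemma sum_deltaList_left_Nil:
  fixes f :: "'d forest \<Rightarrow> 'c::comm_monoid_add"
  shows "(\<Sum>(a,b)\<leftarrow>deltaList F. if a = [] then f b else 0) = f F"
proof (induction F arbitrary: f rule: nvF_less_induct)
  case (1 F)
  show ?case
  proof (cases F)
    case Nil then show ?thesis by simp
  next
    case (Cons t F')
    obtain e ts where t: "t = Node e ts" by (cases t)
    have IH1: "\<And>f :: 'd forest \<Rightarrow> 'c. (\<Sum>(a,b)\<leftarrow>deltaList F'. if a = [] then f b else 0) = f F'"
      using 1 Cons by (simp add: nv_pos)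
    have IH2: "\<And>f :: 'd forest \<Rightarrow> 'c. (\<Sum>(a,b)\<leftarrow>deltaList ts. if a = [] then f b else 0) = f ts"
      using 1 Cons t by simp
    have "(\<Sum>(a,b)\<leftarrow>deltaList (t#F'). if a = [] then f b else 0)
       = (\<Sum>(a1,b1)\<leftarrow>cuts t. \<Sum>(a2,b2)\<leftarrow>deltaList F'. if a1@a2 = [] then f (b1@b2) else 0)"
      unfolding deltaList_Cons sum_list_tensor_list by (simp add: split_def cong: if_cong)
    also have "\<dots> = (\<Sum>(a1,b1)\<leftarrow>cuts t. if a1 = [] then (\<Sum>(a2,b2)\<leftarrow>deltaList F'. if a2 = [] then f (b1@b2) else 0) else 0)"
      by (rule arg_cong[where f=sum_list], rule map_cong) (auto simp: split_def)
    also have "\<dots> = (\<Sum>(a1,b1)\<leftarrow>cuts t. if a1 = [] then f (b1@F') else 0)"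
      using IH1[of "\<lambda>b2. f (_ @ b2)"] by (simp add: split_def cong: if_cong)
    also have "\<dots> = (\<Sum>(a,b)\<leftarrow>deltaList ts. if a = [] then f ([Node e b]@F') else 0)"
      by (simp add: t sum_list_cuts_Node split_def cong: if_cong)
    also have "\<dots> = f (t#F')"
      using IH2[of "\<lambda>b. f ([Node e b]@F')"] by (simp add: t)
    finally show ?thesis using Cons by simp
  qed
qed

section \<open>Grafting and depth words\<close>

lemma less_append_same_length:
  fixes xs ys :: "nat list"
  shows "length xs = length ys \<Longrightarrow> xs < ys \<Longrightarrow> xs @ zs < ys @ ws"
proof (induction xs ys rule: list_induct2)
  case Nil then show ?case by simp
next
  case (Cons x xs y ys) then show ?case by (auto simp: Cons_less_Cons)
qed

lemma append_less_append_iff: fixes xs ys zs :: "nat list" shows "zs @ xs < zs @ ys \<longleftrightarrow> xs < ys"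
  by (induction zs) (auto simp: Cons_less_Cons)

lemma strict_mono_map_less_iff:
  fixes xs ys :: "nat list" and f :: "nat \<Rightarrow> nat"
  assumes "strict_mono f"
  shows "length xs = length ys \<Longrightarrow> map f xs < map f ys \<longleftrightarrow> xs < ys"
proof (induction xs ys rule: list_induct2)
  case Nil then show ?case by simp
next
  case (Cons x xs y ys)
  have "f x < f y \<longleftrightarrow> x < y" "f x = f y \<longleftrightarrow> x = y" using assms
    by (auto simp: strict_mono_less strict_mono_eq)
  with Cons show ?case by (auto simp: Cons_less_Cons)
qed

lemma less_map_add: fixes xs :: "nat list" shows "xs \<noteq> [] \<Longrightarrow> c > 0 \<Longrightarrow> xs < map (\<lambda>k. k + c) xs"
  by (cases xs) (auto simp: Cons_less_Cons)

lemma nvF_last_less: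
  assumes "B \<noteq> []" "last B = Node e ts"
  shows "nvF ts < nvF B"
proof -
  from assms have "B = butlast B @ [Node e ts]" by (metis append_butlast_last_id)
  then have "nvF B = nvF (butlast B) + Suc (nvF ts)" by (metis nvF_append nvF_Cons nvF_Nil nv_Node add_0_right)
  then show ?thesis by simp
qed

text \<open>graft A B hangs A below the last vertex of the rightmost branch of B.\<close>

function graft :: "'d forest \<Rightarrow> 'd forest \<Rightarrow> 'd forest" where
  "graft A B = (if B = [] then A else (case last B of Node e ts \<Rightarrow> butlast B @ [Node e (graft A ts)]))"
  by auto
termination by (relation "measure (\<lambda>(A,B). nvF B)") (auto intro: nvF_last_less)

lemma graft_Nil[simp]: "graft A [] = A"
  by simp

lemma graft_snoc[simp]: "graft A (B0 @ [Node e ts]) = B0 @ [Node e (graft A ts)]"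
  by simp

declare graft.simps[simp del]

text \<open>The depths of the vertices of a forest, listed in reverse preorder.\<close>

fun depths :: "'d forest \<Rightarrow> nat list" where
  "depths [] = []"
| "depths (Node d ts # F) = depths F @ map Suc (depths ts) @ [0]"

lemma depths_append[simp]: "depths (A @ B) = depths B @ depths A"
proof (induction A)
  case Nil then show ?case by simp
next
  case (Cons t A) then show ?case by (cases t) simp
qed

lemma length_depths[simp]: "length (depths F) = nvF F"
  by (induction F rule: depths.induct) simp_all

lemma depths_Nil_iff[simp]: "depths F = [] \<longleftrightarrow> F = []"
  by (cases F rule: depths.cases) auto

lemma snoc_tree_cases:
  obtains "B = []" | B0 e ts where "B = B0 @ [Node e ts]"
  by (metis rev_exhaust ptree.exhaust)

lemma nvF_graft[simp]: "nvF (graft A B) = nvF A + nvF B"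
proof (induction B rule: nvF_less_induct)
  case (1 B)
  show ?case
    by (cases B rule: snoc_tree_cases) (use 1 in auto)
qed

lemma nvF_eq_0[simp]: "nvF F = 0 \<longleftrightarrow> F = []"
  by (cases F) (auto simp: nv_pos)

lemma graft_Nil_iff[simp]: "graft A B = [] \<longleftrightarrow> A = [] \<and> B = []"
  by (cases B rule: snoc_tree_cases) auto

lemma depths_graft:
  "B \<noteq> [] \<Longrightarrow> depths (graft A B) = map (\<lambda>k. k + Suc (hd (depths B))) (depths A) @ depths B"
proof (induction B rule: nvF_less_induct)
  case (1 B)
  then obtain B0 e ts where B: "B = B0 @ [Node e ts]" by (cases B rule: snoc_tree_cases) auto
  show ?case
  proof (cases "ts = []")
    case True then show ?thesis by (simp add: B comp_def)
  next
    case False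
    have "nvF ts < nvF B" by (simp add: B)
    from 1(1)[OF this False]
    have "depths (graft A ts) = map (\<lambda>k. k + Suc (hd (depths ts))) (depths A) @ depths ts" .
    moreover have "hd (depths B) = Suc (hd (depths ts))" using False by (simp add: B hd_append hd_map)
    ultimately show ?thesis by (simp add: B comp_def)
  qed
qed

lemma depths_graft_mono_left:
  assumes "nvF A' = nvF A" "depths A' < depths A"
  shows "depths (graft A' B) < depths (graft A B)"
proof (cases "B = []")
  case True then show ?thesis using assms by simp
next
  case False
  have sm: "strict_mono (\<lambda>k::nat. k + Suc (hd (depths B)))" by (auto simp: strict_mono_def)
  have "map (\<lambda>k. k + Suc (hd (depths B))) (depths A') < map (\<lambda>k. k + Suc (hd (depths B))) (depths A)"
    using strict_mono_map_less_iff[OF sm] assms by simp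
  then show ?thesis unfolding depths_graft[OF False] using less_append_same_length assms by simp
qed

lemma depths_graft_mono_right:
  assumes "A \<noteq> []" "nvF B' = nvF B" "depths B' < depths B"
  shows "depths (graft A B') < depths (graft A B)"
proof -
  have "B \<noteq> []" "B' \<noteq> []" using assms(2,3) by auto
  then obtain h hs h' hs' where h: "depths B = h # hs" and h': "depths B' = h' # hs'"
    by (cases "depths B"; cases "depths B'") auto
  obtain k ks where k: "depths A = k # ks" using assms(1) by (cases "depths A") auto
  from assms(3) h h' have "h' < h \<or> h' = h \<and> hs' < hs" by (simp add: Cons_less_Cons)
  then show ?thesis
    using \<open>B \<noteq> []\<close> \<open>B' \<noteq> []\<close> h h' k by (auto simp: depths_graft Cons_less_Cons append_less_append_iff)
qed

lemma depths_graft_prepend_less: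
  assumes "A \<noteq> []"
  shows "map Suc (depths (graft B R)) @ 0 # X < map Suc (depths (graft (A @ B) R)) @ Y"
proof -
  obtain k ks where k: "depths A = k # ks" using assms by (cases "depths A") auto
  show ?thesis
  proof (cases "R = []")
    case True then show ?thesis using k by (simp add: append_less_append_iff Cons_less_Cons)
  next
    case False
    then obtain h hs where "depths R = h # hs" by (cases "depths R") auto
    then show ?thesis using False k by (simp add: depths_graft append_less_append_iff Cons_less_Cons)
  qed
qed

text \<open>Among the forests G admitting a cut (P, R), graft P R has the largest depth word;
it admits that cut exactly once (count_deltaList_graft).\<close>

lemma depths_less_graft_total_cut_last:
  assumes "R0 \<noteq> []"
  shows "depths (G0 @ [t]) < depths (graft (P0 @ [t]) R0)"
proof -
  define c where "c = Suc (hd (depths R0))"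
  have "depths (graft (P0 @ [t]) R0) = map (\<lambda>k. k + c) (depths [t]) @ (map (\<lambda>k. k + c) (depths P0) @ depths R0)"
    using assms by (simp add: depths_graft c_def)
  moreover have "depths [t] < map (\<lambda>k. k + c) (depths [t])"
    by (rule less_map_add) (simp_all add: c_def)
  ultimately show ?thesis by (simp add: less_append_same_length)
qed

lemma depths_less_graft_left_nonempty:
  assumes "P0 \<noteq> []" "nvF ts = nvF (graft Pt R1)" "depths ts \<le> depths (graft Pt R1)"
  shows "depths (G0 @ [Node e ts]) < depths (graft (P0 @ Pt) (R0 @ [Node e R1]))"
proof -
  have star: "map Suc (depths (graft Pt R1)) @ 0 # X < map Suc (depths (graft (P0 @ Pt) R1)) @ Y" for X Y
    using depths_graft_prepend_less[OF assms(1)] .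
  show ?thesis
  proof (cases "depths ts = depths (graft Pt R1)")
    case True
    then show ?thesis using star by simp
  next
    case False
    with assms(3) have "depths ts < depths (graft Pt R1)" by simp
    then have "map Suc (depths ts) < map Suc (depths (graft Pt R1))"
      using assms(2) strict_mono_map_less_iff[of Suc] by (simp add: strict_mono_Suc_iff)
    then have "map Suc (depths ts) @ 0 # depths G0 < map Suc (depths (graft Pt R1)) @ 0 # depths R0"
      using assms(2) by (intro less_append_same_length) simp_all
    also have "\<dots> < map Suc (depths (graft (P0 @ Pt) R1)) @ 0 # depths R0" by (rule star)
    finally show ?thesis by simp
  qed
qed

lemma depths_graft_total_cut_last:
  assumes "(P0,R0) \<in> set (deltaList G0)"
  shows "depths (G0 @ [t]) < depths (graft (P0 @ [t]) R0) \<or> G0 @ [t] = graft (P0 @ [t]) R0"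
proof (cases "R0 = []")
  case True
  with assms have "P0 = G0" using deltaList_right_Nil by blast
  with True show ?thesis by simp
next
  case False
  then show ?thesis using depths_less_graft_total_cut_last by blast
qed

lemma depths_graft_inner_cut_last:
  assumes c0: "(P0,R0) \<in> set (deltaList G0)" and len: "nvF ts = nvF (graft Pt R1)"
    and IH: "depths ts < depths (graft Pt R1) \<or> ts = graft Pt R1"
  shows "depths (G0 @ [Node e ts]) < depths (graft (P0 @ Pt) (R0 @ [Node e R1]))
    \<or> G0 @ [Node e ts] = graft (P0 @ Pt) (R0 @ [Node e R1])"
proof (cases "P0 = []")
  case True
  with c0 have R0: "R0 = G0" using deltaList_left_Nil by blast
  from IH show ?thesis
  proof
    assume "depths ts < depths (graft Pt R1)"
    then have "map Suc (depths ts) < map Suc (depths (graft Pt R1))"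
      using len strict_mono_map_less_iff[of Suc] by (simp add: strict_mono_Suc_iff)
    then show ?thesis
      using len by (simp add: True R0 less_append_same_length)
  qed (simp add: True R0)
next
  case False
  then show ?thesis using depths_less_graft_left_nonempty[OF False len] IH by auto
qed

lemma depths_deltaList_graft:
  "(P,R) \<in> set (deltaList G) \<Longrightarrow> depths G < depths (graft P R) \<or> G = graft P R"
proof (induction G arbitrary: P R rule: nvF_less_induct)
  case (1 G)
  show ?case
  proof (cases G rule: snoc_tree_cases)
    case 1 then show ?thesis using "1.prems" by simp
  next
    case (2 G0 e ts)
    from "1.prems" obtain P0 R0 Pt Rt where PR: "P = P0@Pt" "R = R0@Rt" and c0: "(P0,R0) \<in> set (deltaList G0)"
      and ct: "(Pt,Rt) \<in> set (cuts (Node e ts))"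
      by (auto simp: 2 deltaList_append_set deltaList_single)
    from ct consider "Pt = [Node e ts]" "Rt = []" | R1 where "Rt = [Node e R1]" "(Pt,R1) \<in> set (deltaList ts)"
      by (auto simp: cuts_Node_set)
    then show ?thesis
    proof cases
      case 1
      then show ?thesis using depths_graft_total_cut_last[OF c0, of "Node e ts"] by (simp add: 2 PR)
    next
      case (2 R1)
      have "depths ts < depths (graft Pt R1) \<or> ts = graft Pt R1"
        using "1.IH"[OF _ 2(2)] \<open>G = G0 @ [Node e ts]\<close> by simp
      moreover have "nvF ts = nvF (graft Pt R1)" using deltaList_nv[OF 2(2)] by simp
      ultimately show ?thesis
        using depths_graft_inner_cut_last[OF c0] \<open>G = G0 @ [Node e ts]\<close> by (simp add: PR 2)
    qed
  qed
qed

lemma count_list_sum: "count_list xs x = (\<Sum>y\<leftarrow>xs. if y = x then 1 else 0)"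
  by (induction xs) auto

lemma sum_map_cong: "(\<And>x. x \<in> set xs \<Longrightarrow> f x = g x) \<Longrightarrow> sum_list (map f xs) = sum_list (map g xs)"
  by (metis map_cong)

lemma count_deltaList_graft: "count_list (deltaList (graft P R)) (P,R) = 1"
proof (induction R rule: nvF_less_induct)
  case (1 R)
  show ?case
  proof (cases R rule: snoc_tree_cases)
    case 1
    have "count_list (deltaList P) (P,[]) = (\<Sum>(a,b)\<leftarrow>deltaList P. if b = [] then (if a = P then 1 else 0) else 0)"
      unfolding count_list_sum by (rule sum_map_cong) (auto simp: split_def)
    also have "\<dots> = 1" using sum_deltaList_right_Nil[of "\<lambda>a. if a = P then (1::nat) else 0" P] by simp
    finally show ?thesis using 1 by simp
  next
    case (2 R0 e R1)
    define X where "X = graft P R1"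
    have lt: "nvF R1 < nvF R" using 2 by simp
    have IH: "count_list (deltaList X) (P,R1) = 1" using 1 lt X_def by simp
    have "count_list (deltaList (graft P R)) (P,R) =
      (\<Sum>(a,b)\<leftarrow>deltaList R0. \<Sum>(c,d)\<leftarrow>cuts (Node e X). if a@c = P \<and> b@d = R0@[Node e R1] then 1 else 0)"
      unfolding count_list_sum 2 graft_snoc X_def deltaList_append deltaList_single sum_list_tensor_list
      by (simp add: split_def cong: if_cong)
    also have "\<dots> = (\<Sum>(a,b)\<leftarrow>deltaList R0. if a = [] then (if b = R0 then 1 else 0) else 0)"
    proof (rule sum_map_cong, clarify)
      fix a b assume ab: "(a,b) \<in> set (deltaList R0)"
      have nvab: "nvF a + nvF b = nvF R0" using deltaList_nv[OF ab] by simp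
      have A: "\<not> (b = R0 @ [Node e R1])" using nvab by (auto dest: arg_cong[where f=nvF])
      have "(\<Sum>(c,d)\<leftarrow>cuts (Node e X). if a@c = P \<and> b@d = R0@[Node e R1] then 1 else (0::nat))
          = (\<Sum>(c,d)\<leftarrow>deltaList X. if a@c = P \<and> b@[Node e d] = R0@[Node e R1] then 1 else (0::nat))"
        using A by (simp add: sum_list_cuts_Node split_def)
      also have "\<dots> = (\<Sum>(c,d)\<leftarrow>deltaList X. if b = R0 \<and> a = [] then (if (c,d) = (P,R1) then 1 else 0) else 0)"
        using nvab by (intro sum_map_cong) (auto split: if_splits)
      also have "\<dots> = (if a = [] then (if b = R0 then 1 else 0) else 0)"
        using IH unfolding count_list_sum by (auto simp: split_def)
      finally show "(\<Sum>(c,d)\<leftarrow>cuts (Node e X). if a@c = P \<and> b@d = R0@[Node e R1] then 1 else 0)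
          = (if a = [] then (if b = R0 then 1 else 0) else (0::nat))" .
    qed
    also have "\<dots> = 1" using sum_deltaList_left_Nil[of "\<lambda>b. if b = R0 then (1::nat) else 0" R0] by simp
    finally show ?thesis .
  qed
qed

section \<open>Triangularity of the pairing\<close>

text \<open>pair_gamma d ts u is (ts, gamma_d u); thus pair_Cons below is the defining rule
(B_d^+(ts) F, G) = (B_d^+(ts) \<otimes> F, Delta G).\<close>

definition pair_gamma :: "'d \<Rightarrow> 'd forest \<Rightarrow> 'd forest \<Rightarrow> rat" where
  "pair_gamma d ts u = (if u \<noteq> [] \<and> last u = Node d [] then pair ts (butlast u) else 0)"

lemma pair_Cons: "pair (Node d ts # F) G = (\<Sum>(u,v)\<leftarrow>deltaList G. pair_gamma d ts u * pair F v)"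
  by (simp add: pair_gamma_def split_def)

declare pair.simps(2)[simp del]

lemma pair_Nil: "pair [] G = (if G = [] then 1 else 0)"
  by simp

lemma sum_list_nonzero:
  fixes f :: "'a \<Rightarrow> 'b::comm_monoid_add"
  shows "(\<Sum>x\<leftarrow>xs. f x) \<noteq> 0 \<Longrightarrow> \<exists>x\<in>set xs. f x \<noteq> 0"
  by (induction xs) auto

lemma sum_list_indicator:
  "(\<Sum>y\<leftarrow>xs. if y = x then (1::'a::semiring_1) else 0) = of_nat (count_list xs x)"
  by (induction xs) auto

lemma pair_nonzero_Cons:
  assumes "pair (Node d ts # F) G \<noteq> 0"
  shows "\<exists>u v. (u@[Node d []], v) \<in> set (deltaList G) \<and> pair ts u \<noteq> 0 \<and> pair F v \<noteq> 0"
proof -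
  from sum_list_nonzero[OF assms[unfolded pair_Cons]] obtain u v where
    uv: "(u,v) \<in> set (deltaList G)" "pair_gamma d ts u * pair F v \<noteq> 0" by auto
  then have "u \<noteq> []" "last u = Node d []" "pair ts (butlast u) \<noteq> 0" "pair F v \<noteq> 0"
    by (auto simp: pair_gamma_def split: if_splits)
  then have "u = butlast u @ [Node d []]" by (metis append_butlast_last_id)
  with uv \<open>pair ts (butlast u) \<noteq> 0\<close> \<open>pair F v \<noteq> 0\<close> show ?thesis by metis
qed

lemma pair_nv: "pair F G \<noteq> 0 \<Longrightarrow> nvF G = nvF F"
proof (induction F arbitrary: G rule: nvF_less_induct)
  case (1 F)
  show ?case
  proof (cases F)
    case Nil then show ?thesis using "1.prems" by (simp split: if_splits)
  next
    case (Cons t F')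
    obtain d ts where t: "t = Node d ts" by (cases t)
    from pair_nonzero_Cons[of d ts F' G] "1.prems" obtain u v where
      uv: "(u@[Node d []], v) \<in> set (deltaList G)" "pair ts u \<noteq> 0" "pair F' v \<noteq> 0"
      using Cons t by auto
    have "nvF u = nvF ts" using "1.IH"[OF _ uv(2)] Cons t by simp
    moreover have "nvF v = nvF F'" using "1.IH"[OF _ uv(3)] Cons t by (simp add: nv_pos)
    moreover have "nvF (u@[Node d []]) + nvF v = nvF G" using deltaList_nv[OF uv(1)] by simp
    ultimately show ?thesis using Cons t by simp
  qed
qed

text \<open>max_partner F is the forest with the largest depth word among those pairing
nontrivially with F, and F pairs with it to 1: in this order the pairing is unitriangular.\<close>

fun max_partner :: "'d forest \<Rightarrow> 'd forest" where
  "max_partner [] = []"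
| "max_partner (Node d S # F) = graft (max_partner S @ [Node d []]) (max_partner F)"

lemma nvF_max_partner[simp]: "nvF (max_partner F) = nvF F"
  by (induction F rule: max_partner.induct) simp_all

lemma max_partner_Nil_iff[simp]: "max_partner F = [] \<longleftrightarrow> F = []"
  by (cases F rule: max_partner.cases) auto

lemma depths_le_max_partner_Cons:
  assumes G: "(u@[Node d []], v) \<in> set (deltaList G)"
    and u: "u = max_partner S \<or> depths u < depths (max_partner S)" "nvF u = nvF S"
    and v: "v = max_partner F \<or> depths v < depths (max_partner F)" "nvF v = nvF F"
  shows "depths G < depths (max_partner (Node d S # F))
    \<or> G = max_partner (Node d S # F) \<and> u = max_partner S \<and> v = max_partner F"
proof -
  let ?m = "max_partner S @ [Node d []]"
  have 1: "depths G < depths (graft (u@[Node d []]) v) \<or> G = graft (u@[Node d []]) v"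
    by (rule depths_deltaList_graft[OF G])
  have 2: "depths (graft (u@[Node d []]) v) < depths (graft ?m v) \<or> u = max_partner S"
    using u depths_graft_mono_left[of "u@[Node d []]" ?m v] by (auto simp: Cons_less_Cons)
  have 3: "depths (graft ?m v) < depths (graft ?m (max_partner F)) \<or> v = max_partner F"
    using v depths_graft_mono_right[of ?m v "max_partner F"] by auto
  from 1 2 3 show ?thesis
    by (elim disjE) (auto dest: order.strict_trans)
qed

lemma pair_nonzero_max_partner: "pair F G \<noteq> 0 \<Longrightarrow> G = max_partner F \<or> depths G < depths (max_partner F)"
proof (induction F arbitrary: G rule: nvF_less_induct)
  case (1 F)
  show ?case
  proof (cases F)
    case Nil then show ?thesis using "1.prems" by (simp split: if_splits)
  next
    case (Cons t F')
    obtain d S where t: "t = Node d S" by (cases t)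
    from pair_nonzero_Cons[of d S F' G] "1.prems" obtain u v where
      uv: "(u@[Node d []], v) \<in> set (deltaList G)" "pair S u \<noteq> 0" "pair F' v \<noteq> 0"
      using Cons t by auto
    have "nvF S < nvF F" "nvF F' < nvF F" using Cons t by (simp_all add: nv_pos)
    with "1.IH" uv have "u = max_partner S \<or> depths u < depths (max_partner S)"
      "v = max_partner F' \<or> depths v < depths (max_partner F')" by blast+
    from depths_le_max_partner_Cons[OF uv(1) this(1) pair_nv[OF uv(2)] this(2) pair_nv[OF uv(3)]]
    show ?thesis using Cons t by auto
  qed
qed

lemma pair_max_partner: "pair F (max_partner F) = 1"
proof (induction F rule: nvF_less_induct)
  case (1 F)
  show ?case
  proof (cases F)
    case Nil then show ?thesis by simp
  next
    case (Cons t F')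
    obtain d S where t: "t = Node d S" by (cases t)
    have IH: "pair S (max_partner S) = 1" "pair F' (max_partner F') = 1"
      using "1.IH" Cons t by (simp_all add: nv_pos)
    let ?uv = "(max_partner S @ [Node d []], max_partner F')"
    have "pair F (max_partner F) = (\<Sum>uv\<leftarrow>deltaList (max_partner F). if uv = ?uv then 1 else 0)"
      unfolding Cons t pair_Cons split_def
    proof (rule sum_map_cong)
      fix uv assume uv: "uv \<in> set (deltaList (max_partner (Node d S # F')))"
      show "pair_gamma d S (fst uv) * pair F' (snd uv) = (if uv = ?uv then 1 else 0)"
      proof (cases "pair_gamma d S (fst uv) * pair F' (snd uv) = 0")
        case False
        then have "fst uv \<noteq> []" "last (fst uv) = Node d []" and
          nz: "pair S (butlast (fst uv)) \<noteq> 0" "pair F' (snd uv) \<noteq> 0"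
          by (auto simp: pair_gamma_def split: if_splits)
        then have fe: "fst uv = butlast (fst uv) @ [Node d []]" by (metis append_butlast_last_id)
        then have "(butlast (fst uv) @ [Node d []], snd uv) \<in> set (deltaList (max_partner (Node d S # F')))"
          using uv by (metis prod.collapse)
        from depths_le_max_partner_Cons[OF this pair_nonzero_max_partner[OF nz(1)] pair_nv[OF nz(1)]
            pair_nonzero_max_partner[OF nz(2)] pair_nv[OF nz(2)]]
        have "uv = ?uv" using fe by (metis less_irrefl prod.collapse)
        then show ?thesis using IH by (simp add: pair_gamma_def)
      next
        case True
        moreover have "uv \<noteq> ?uv" using True IH by (auto simp: pair_gamma_def)
        ultimately show ?thesis by simp
      qed
    qed
    also have "\<dots> = 1"
      by (simp add: sum_list_indicator Cons t count_deltaList_graft)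
    finally show ?thesis .
  qed
qed

lemma graft_leaf_inj:
  "graft (A@[Node d []]) B = graft (A'@[Node d' []]) B' \<Longrightarrow> A = A' \<and> d = d' \<and> B = B'"
proof (induction B arbitrary: B' rule: nvF_less_induct)
  case (1 B)
  show ?case
  proof (cases B rule: snoc_tree_cases)
    case 1
    then show ?thesis using "1.prems"
      by (cases B' rule: snoc_tree_cases) (auto simp: eq_commute[of "[]"])
  next
    case (2 B0 e ts)
    then show ?thesis using "1.prems" "1.IH"[of ts]
      by (cases B' rule: snoc_tree_cases) (auto simp: eq_commute[of "[]"])
  qed
qed

lemma max_partner_inj: "max_partner F = max_partner G \<Longrightarrow> F = G"
proof (induction F arbitrary: G rule: nvF_less_induct)
  case (1 F)
  show ?case
  proof (cases F)
    case Nil then show ?thesis using "1.prems" by (simp add: eq_commute[of "[]"])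
  next
    case (Cons t F')
    obtain d S where t: "t = Node d S" by (cases t)
    from "1.prems" Cons have "G \<noteq> []" by auto
    then obtain d' S' G' where G: "G = Node d' S' # G'" by (metis list.exhaust ptree.exhaust)
    from 1(2) Cons t G have "graft (max_partner S @ [Node d []]) (max_partner F') = graft (max_partner S' @ [Node d' []]) (max_partner G')" by simp
    from graft_leaf_inj[OF this] have "max_partner S = max_partner S'" "d = d'" "max_partner F' = max_partner G'" by auto
    moreover have "nvF S < nvF F" "nvF F' < nvF F" using Cons t by (simp_all add: nv_pos)
    ultimately show ?thesis using 1(1) Cons t G by metis
  qed
qed

lemma pair_max_partner_less:
  assumes "pair H (max_partner K) \<noteq> 0" "H \<noteq> K"
  shows "depths (max_partner K) < depths (max_partner H)"
  using pair_nonzero_max_partner[OF assms(1)] max_partner_inj assms(2) by blast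

definition decorations :: "'d forest \<Rightarrow> 'd set" where
  "decorations F = (\<Union>t\<in>set F. set_ptree t)"

lemma decorations_Nil[simp]: "decorations [] = {}" by (simp add: decorations_def)
lemma decorations_Cons[simp]: "decorations (t#F) = set_ptree t \<union> decorations F" by (simp add: decorations_def)
lemma decorations_append[simp]: "decorations (A@B) = decorations A \<union> decorations B" by (simp add: decorations_def)
lemma set_ptree_Node[simp]: "set_ptree (Node e ts) = insert e (decorations ts)" by (simp add: decorations_def)
declare ptree.set[simp del]

lemma finite_set_ptree[simp]: "finite (set_ptree t)"
  by (induction t) (auto simp: decorations_def)

lemma finite_decorations[simp]: "finite (decorations F)"
  by (simp add: decorations_def)

lemma decorations_deltaList: "(a,b) \<in> set (deltaList G) \<Longrightarrow> decorations G = decorations a \<union> decorations b"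
proof (induction G arbitrary: a b rule: nvF_less_induct)
  case (1 G)
  show ?case
  proof (cases G)
    case Nil then show ?thesis using 1 by simp
  next
    case (Cons t F)
    obtain e ts where t: "t = Node e ts" by (cases t)
    from 1(2) obtain a1 b1 c d where ab: "a = a1@c" "b = b1@d" and c1: "(a1,b1) \<in> set (cuts t)"
      and c2: "(c,d) \<in> set (deltaList F)" using Cons by (auto simp: deltaList_Cons_set)
    have IHF: "decorations F = decorations c \<union> decorations d" using 1(1)[OF _ c2] Cons by (simp add: nv_pos)
    have "decorations [t] = decorations a1 \<union> decorations b1"
    proof -
      from c1 t consider "a1 = [t]" "b1 = []" | r where "b1 = [Node e r]" "(a1,r) \<in> set (deltaList ts)"
        by (auto simp: cuts_Node_set)
      then show ?thesis
      proof cases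
        case 1 then show ?thesis by simp
      next
        case (2 r)
        have "decorations ts = decorations a1 \<union> decorations r" using 1(1)[OF _ 2(2)] Cons t by simp
        then show ?thesis using 2 t by auto
      qed
    qed
    then show ?thesis using IHF ab Cons by auto
  qed
qed

lemma pair_decorations: "pair F G \<noteq> 0 \<Longrightarrow> decorations G \<subseteq> decorations F"
proof (induction F arbitrary: G rule: nvF_less_induct)
  case (1 F)
  show ?case
  proof (cases F)
    case Nil then show ?thesis using 1 by (simp split: if_splits)
  next
    case (Cons t F')
    obtain d ts where t: "t = Node d ts" by (cases t)
    from pair_nonzero_Cons[of d ts F' G] 1(2) obtain u' v where
      uv: "(u'@[Node d []], v) \<in> set (deltaList G)" "pair ts u' \<noteq> 0" "pair F' v \<noteq> 0"
      using Cons t by auto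
    have "decorations u' \<subseteq> decorations ts" using 1(1)[OF _ uv(2)] Cons t by simp
    moreover have "decorations v \<subseteq> decorations F'" using 1(1)[OF _ uv(3)] Cons t by (simp add: nv_pos)
    moreover have "decorations G = decorations (u'@[Node d []]) \<union> decorations v" by (rule decorations_deltaList[OF uv(1)])
    ultimately show ?thesis using Cons t by auto
  qed
qed

lemma decorations_graft[simp]: "decorations (graft A B) = decorations A \<union> decorations B"
proof (induction B rule: nvF_less_induct)
  case (1 B)
  show ?case
  proof (cases B rule: snoc_tree_cases)
    case 1 then show ?thesis by simp
  next
    case (2 B0 e ts)
    then have "nvF ts < nvF B" by simp
    with 1 2 show ?thesis by auto
  qed
qed

lemma decorations_max_partner[simp]: "decorations (max_partner F) = decorations F"
  by (induction F rule: max_partner.induct) auto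

lemma finite_forests_bounded: "finite D \<Longrightarrow> finite {F. nvF F \<le> n \<and> decorations F \<subseteq> D}"
proof (induction n)
  case 0 then show ?case by simp
next
  case (Suc n)
  let ?S = "{F. nvF F \<le> n \<and> decorations F \<subseteq> D}"
  have "{F. nvF F \<le> Suc n \<and> decorations F \<subseteq> D} \<subseteq> insert [] ((\<lambda>(d,ts,F). Node d ts # F) ` (D \<times> ?S \<times> ?S))"
  proof
    fix F assume F: "F \<in> {F. nvF F \<le> Suc n \<and> decorations F \<subseteq> D}"
    show "F \<in> insert [] ((\<lambda>(d,ts,F). Node d ts # F) ` (D \<times> ?S \<times> ?S))"
    proof (cases F)
      case Nil then show ?thesis by simp
    next
      case (Cons t F')
      obtain d ts where t: "t = Node d ts" by (cases t)
      have "nvF ts \<le> n" "nvF F' \<le> n" "d \<in> D" "decorations ts \<subseteq> D" "decorations F' \<subseteq> D"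
        using F Cons t by (auto simp: nv_pos)
      then show ?thesis using Cons t by (auto intro!: image_eqI[where x="(d,ts,F')"])
    qed
  qed
  moreover have "finite (insert [] ((\<lambda>(d,ts,F). Node d ts # F) ` (D \<times> ?S \<times> ?S)))"
    using Suc by simp
  ultimately show ?case by (rule finite_subset)
qed

lemma finite_pair_supp: "finite {G. pair F G \<noteq> 0}"
proof (rule finite_subset[OF _ finite_forests_bounded[of "decorations F" "nvF F"]])
  show "{G. pair F G \<noteq> 0} \<subseteq> {G. nvF G \<le> nvF F \<and> decorations G \<subseteq> decorations F}"
    using pair_nv pair_decorations by fastforce
qed simp

section \<open>Nondegeneracy of the pairing and the dual basis\<close>

lemma triangular_system_solvable:
  fixes A :: "'a \<Rightarrow> 'a \<Rightarrow> 'c::comm_ring_1" and r :: "'a \<Rightarrow> 'b::linorder"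
  assumes fin: "finite T0"
    and diag: "\<And>K. K \<in> T0 \<Longrightarrow> A K K = 1"
    and tri: "\<And>H K. H \<in> T0 \<Longrightarrow> K \<in> T0 \<Longrightarrow> A H K \<noteq> 0 \<Longrightarrow> H \<noteq> K \<Longrightarrow> r K < r H"
  shows "\<exists>x. \<forall>K\<in>T0. (\<Sum>H\<in>T0. x H * A H K) = b K"
  using fin
proof (induction T0 arbitrary: b rule: finite_remove_induct)
  case empty then show ?case by simp
next
  case (remove T)
  have finr: "finite (r ` T)" "r ` T \<noteq> {}" using remove(1,2) by auto
  obtain M where M: "M \<in> T" "r M = Max (r ` T)"
    using Max_in[OF finr] by (metis imageE)
  have col: "A H M = 0" if "H \<in> T - {M}" for H
    using that M Max_ge[OF finr(1)] tri[of H M] remove(3) by fastforce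
  obtain x' where x': "\<forall>K\<in>T - {M}. (\<Sum>H\<in>T - {M}. x' H * A H K) = b K - b M * A M K"
    using remove.IH[OF M(1), of "\<lambda>K. b K - b M * A M K"] by blast
  define x where "x = x'(M := b M)"
  have split: "(\<Sum>H\<in>T. x H * A H K) = b M * A M K + (\<Sum>H\<in>T - {M}. x' H * A H K)" for K
    using remove(1) M(1) by (simp add: x_def sum.remove)
  have "(\<Sum>H\<in>T. x H * A H K) = b K" if K: "K \<in> T" for K
  proof (cases "K = M")
    case True
    then show ?thesis using split[of M] col diag[of M] M(1) remove(3) by auto
  next
    case False
    then show ?thesis using split[of K] x' K by simp
  qed
  then show ?case by blast
qed

definition supp :: "('a \<Rightarrow> rat) \<Rightarrow> 'a set" where "supp x = {F. x F \<noteq> 0}"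

lemma fin_supp_iff: "fin_supp x \<longleftrightarrow> finite (supp x)" by (simp add: fin_supp_def supp_def)

lemma pairH_supp: "pairH x G = (\<Sum>F\<in>supp x. x F * pair F G)" by (simp add: pairH_def supp_def)

lemma pairH_eq_sum: "finite S \<Longrightarrow> supp x \<subseteq> S \<Longrightarrow> pairH x G = (\<Sum>F\<in>S. x F * pair F G)"
  unfolding pairH_def supp_def by (rule sum.mono_neutral_left) auto

lemma fin_supp_diff: "fin_supp x \<Longrightarrow> fin_supp y \<Longrightarrow> fin_supp (\<lambda>F. x F - y F)"
  unfolding fin_supp_def by (rule finite_subset[of _ "{F. x F \<noteq> 0} \<union> {F. y F \<noteq> 0}"]) auto

lemma pairH_diff:
  assumes "fin_supp x" "fin_supp y"
  shows "pairH (\<lambda>F. x F - y F) G = pairH x G - pairH y G"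
proof -
  let ?S = "{F. x F \<noteq> 0} \<union> {F. y F \<noteq> 0}"
  have fS: "finite ?S" using assms by (simp add: fin_supp_def)
  have "pairH (\<lambda>F. x F - y F) G = (\<Sum>F\<in>?S. (x F - y F) * pair F G)"
    by (rule pairH_eq_sum[OF fS]) (auto simp: supp_def)
  also have "\<dots> = (\<Sum>F\<in>?S. x F * pair F G) - (\<Sum>F\<in>?S. y F * pair F G)"
    by (simp add: left_diff_distrib sum_subtractf)
  also have "\<dots> = pairH x G - pairH y G"
    using pairH_eq_sum[OF fS, of x G] pairH_eq_sum[OF fS, of y G] by (auto simp: supp_def)
  finally show ?thesis .
qed

lemma pairH_nondegenerate:
  assumes fs: "fin_supp x" and z: "\<And>G. pairH x G = 0"
  shows "x = (\<lambda>_. 0)"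
proof (rule ccontr)
  let ?d = "\<lambda>H. depths (max_partner H)"
  assume "x \<noteq> (\<lambda>_. 0)"
  then have ne: "supp x \<noteq> {}" by (auto simp: supp_def)
  have fin: "finite (supp x)" using fs by (simp add: fin_supp_iff)
  have finr: "finite (?d ` supp x)" "?d ` supp x \<noteq> {}" using fin ne by auto
  obtain H0 where H0: "H0 \<in> supp x" "?d H0 = Max (?d ` supp x)"
    using Max_in[OF finr] by (metis (no_types, lifting) imageE)
  have "pair H (max_partner H0) = 0" if "H \<in> supp x - {H0}" for H
    using that H0 Max_ge[OF finr(1)] pair_max_partner_less[of H H0] by force
  then have "pairH x (max_partner H0) = x H0 * pair H0 (max_partner H0)"
    unfolding pairH_supp using fin H0(1) by (simp add: sum.remove)
  with z[of "max_partner H0"] H0(1) show False by (simp add: pair_max_partner supp_def)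
qed

lemma eq_by_pairH:
  assumes "fin_supp x" "fin_supp y" "\<And>Z. pairH x Z = pairH y Z"
  shows "x = y"
proof -
  have "(\<lambda>H. x H - y H) = (\<lambda>_. 0)"
    by (rule pairH_nondegenerate) (use assms in \<open>simp_all add: fin_supp_diff pairH_diff\<close>)
  then show ?thesis by (simp add: fun_eq_iff)
qed

lemma max_partner_bij: "max_partner ` {H. nvF H = n \<and> decorations H \<subseteq> D} = {H. nvF H = n \<and> decorations H \<subseteq> D}" if "finite D"
proof (rule endo_inj_surj)
  show "finite {H. nvF H = n \<and> decorations H \<subseteq> D}"
    by (rule finite_subset[OF _ finite_forests_bounded[OF that, of n]]) auto
  show "max_partner ` {H. nvF H = n \<and> decorations H \<subseteq> D} \<subseteq> {H. nvF H = n \<and> decorations H \<subseteq> D}" by auto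
  show "inj_on max_partner {H. nvF H = n \<and> decorations H \<subseteq> D}" by (rule inj_onI) (erule max_partner_inj)
qed

lemma dual_element_exists: "\<exists>x. fin_supp x \<and> (\<forall>G. pairH x G = (if G = F then 1 else 0))"
proof -
  define T where "T = {H. nvF H = nvF F \<and> decorations H \<subseteq> decorations F}"
  have finT: "finite T" unfolding T_def
    by (rule finite_subset[OF _ finite_forests_bounded[of "decorations F" "nvF F"]]) auto
  have phiT: "max_partner ` T = T" unfolding T_def by (rule max_partner_bij) simp
  have FT: "F \<in> T" by (simp add: T_def)
  have "\<exists>x. \<forall>K\<in>T. (\<Sum>H\<in>T. x H * pair H (max_partner K)) = (if max_partner K = F then 1 else 0)"
    by (rule triangular_system_solvable[OF finT, where r="\<lambda>K. depths (max_partner K)"])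
      (simp_all add: pair_max_partner pair_max_partner_less)
  then obtain x where x: "\<forall>K\<in>T. (\<Sum>H\<in>T. x H * pair H (max_partner K)) = (if max_partner K = F then 1 else 0)" ..
  define y where "y H = (if H \<in> T then x H else 0)" for H
  have supp_y: "supp y \<subseteq> T" by (auto simp: y_def supp_def split: if_splits)
  have fs: "fin_supp y" unfolding fin_supp_iff using finite_subset[OF supp_y finT] .
  have "pairH y G = (if G = F then 1 else 0)" for G
  proof -
    have "pairH y G = (\<Sum>H\<in>T. y H * pair H G)" by (rule pairH_eq_sum[OF finT supp_y])
    also have "\<dots> = (\<Sum>H\<in>T. x H * pair H G)" by (rule sum.cong) (auto simp: y_def)
    finally have py: "pairH y G = (\<Sum>H\<in>T. x H * pair H G)" .
    show ?thesis
    proof (cases "G \<in> T")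
      case True
      then obtain K where K: "K \<in> T" "G = max_partner K" using phiT by (metis imageE)
      then show ?thesis using py x K(1) by simp
    next
      case False
      have "\<And>H. H \<in> T \<Longrightarrow> pair H G = 0"
      proof (rule ccontr)
        fix H assume H: "H \<in> T" "pair H G \<noteq> 0"
        then have "G \<in> T" using pair_nv[OF H(2)] pair_decorations[OF H(2)] by (auto simp: T_def)
        with False show False by simp
      qed
      then show ?thesis using py False FT by auto
    qed
  qed
  with fs show ?thesis by blast
qed

lemma eb_dual: "fin_supp (eb F) \<and> (\<forall>G. pairH (eb F) G = (if G = F then 1 else 0))"
proof -
  obtain x where x: "fin_supp x" "\<forall>G. pairH x G = (if G = F then 1 else 0)" using dual_element_exists by blast
  have "eb F = x" unfolding eb_def
  proof (rule the_equality)
    show "fin_supp x \<and> (\<forall>G. pairH x G = (if G = F then 1 else 0))" using x by blast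
    show "y = x" if "fin_supp y \<and> (\<forall>G. pairH y G = (if G = F then 1 else 0))" for y
      using that x by (intro eq_by_pairH) simp_all
  qed
  with x show ?thesis by simp
qed

lemma fin_supp_eb: "fin_supp (eb F)"
  using eb_dual by blast

lemma pairH_eb: "pairH (eb F) G = (if G = F then 1 else 0)"
  using eb_dual by blast

section \<open>The pairing is a Hopf pairing\<close>

lemma if_zero_mult: "(if P then (x::'a::mult_zero) else 0) * y = (if P then x * y else 0)" by simp
lemma mult_if_zero: "y * (if P then (x::'a::mult_zero) else 0) = (if P then y * x else 0)" by simp

lemmas sum_list_distrib = sum_list_const_mult[symmetric] sum_list_mult_const[symmetric]

lemma pair_append_left: "pair (A@B) G = (\<Sum>(u,v)\<leftarrow>deltaList G. pair A u * pair B v)"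
proof (induction A arbitrary: G)
  case Nil
  show ?case using sum_deltaList_left_Nil[of "\<lambda>v. pair B v" G]
    by (simp add: pair_Nil split_def if_zero_mult cong: if_cong)
next
  case (Cons t A)
  obtain d ts where t: "t = Node d ts" by (cases t)
  have "pair (t#A@B) G = (\<Sum>(u,v)\<leftarrow>deltaList G. \<Sum>(x,y)\<leftarrow>deltaList v. pair_gamma d ts u * pair A x * pair B y)"
    by (simp add: t pair_Cons Cons.IH split_def sum_list_distrib mult.assoc)
  also have "\<dots> = (\<Sum>(u,v)\<leftarrow>deltaList G. \<Sum>(x,y)\<leftarrow>deltaList u. pair_gamma d ts x * pair A y * pair B v)"
    by (rule deltaList_coassoc[symmetric])
  also have "\<dots> = (\<Sum>(u,v)\<leftarrow>deltaList G. pair (t#A) u * pair B v)"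
    by (simp add: t pair_Cons split_def sum_list_distrib)
  finally show ?case by simp
qed

text \<open>Dually to the Leibniz rule for B_d^+, gamma_d is a twisted derivation for concatenation.\<close>

lemma pair_gamma_append:
  assumes "\<And>G1 G2. pair ts (G1@G2) = (\<Sum>(a,b)\<leftarrow>deltaList ts. pair a G1 * pair b G2)"
  shows "pair_gamma d ts (u1@u2)
    = (if u2 = [] then pair_gamma d ts u1 else 0) + (\<Sum>(x,y)\<leftarrow>deltaList ts. pair x u1 * pair_gamma d y u2)"
  by (simp add: pair_gamma_def butlast_append assms split_def sum_list_distrib mult_if_zero)

lemma pair_append_right: "pair F (G1@G2) = (\<Sum>(a,b)\<leftarrow>deltaList F. pair a G1 * pair b G2)"
proof (induction F arbitrary: G1 G2 rule: nvF_less_induct)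
  case (1 F)
  show ?case
  proof (cases F)
    case Nil then show ?thesis by (simp add: pair_Nil)
  next
    case (Cons t F')
    obtain d ts where t: "t = Node d ts" by (cases t)
    have IHF: "\<And>G1 G2. pair F' (G1@G2) = (\<Sum>(a,b)\<leftarrow>deltaList F'. pair a G1 * pair b G2)"
      using 1 Cons by (simp add: nv_pos)
    have IHts: "\<And>G1 G2. pair ts (G1@G2) = (\<Sum>(a,b)\<leftarrow>deltaList ts. pair a G1 * pair b G2)"
      using 1 Cons t by simp
    have "pair F (G1@G2) =
      (\<Sum>(u1,v1)\<leftarrow>deltaList G1. \<Sum>(u2,v2)\<leftarrow>deltaList G2. (if u2 = [] then pair_gamma d ts u1 * pair F' (v1@v2) else 0))
    + (\<Sum>(u1,v1)\<leftarrow>deltaList G1. \<Sum>(u2,v2)\<leftarrow>deltaList G2. \<Sum>(x,y)\<leftarrow>deltaList ts.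
         pair x u1 * pair_gamma d y u2 * pair F' (v1@v2))"
      by (simp add: Cons t pair_Cons deltaList_append sum_list_tensor_list split_def pair_gamma_append[OF IHts]
          distrib_right sum_list_addf if_zero_mult sum_list_distrib)
    also have "(\<Sum>(u1,v1)\<leftarrow>deltaList G1. \<Sum>(u2,v2)\<leftarrow>deltaList G2.
        (if u2 = [] then pair_gamma d ts u1 * pair F' (v1@v2) else 0))
      = (\<Sum>(u1,v1)\<leftarrow>deltaList G1. \<Sum>(a2,b2)\<leftarrow>deltaList F'. pair_gamma d ts u1 * pair a2 v1 * pair b2 G2)"
      using sum_deltaList_left_Nil[of "\<lambda>v2. pair_gamma d ts _ * pair F' (_ @ v2)" G2]
      by (simp add: split_def IHF sum_list_distrib mult.assoc cong: if_cong)
    also have "\<dots> = (\<Sum>(a2,b2)\<leftarrow>deltaList F'. \<Sum>(u1,v1)\<leftarrow>deltaList G1. pair_gamma d ts u1 * pair a2 v1 * pair b2 G2)"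
      by (simp add: split_def sum_list_swap[of _ "deltaList G1"])
    also have "\<dots> = (\<Sum>(a2,b2)\<leftarrow>deltaList F'. pair (t#a2) G1 * pair b2 G2)"
      by (simp add: t pair_Cons split_def sum_list_distrib)
    also have "(\<Sum>(u1,v1)\<leftarrow>deltaList G1. \<Sum>(u2,v2)\<leftarrow>deltaList G2. \<Sum>(x,y)\<leftarrow>deltaList ts.
         pair x u1 * pair_gamma d y u2 * pair F' (v1@v2))
      = (\<Sum>(u1,v1)\<leftarrow>deltaList G1. \<Sum>(u2,v2)\<leftarrow>deltaList G2. \<Sum>(x,y)\<leftarrow>deltaList ts. \<Sum>(a2,b2)\<leftarrow>deltaList F'.
             pair x u1 * pair a2 v1 * (pair_gamma d y u2 * pair b2 v2))"
      by (simp add: IHF split_def sum_list_distrib mult_ac)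
    also have "\<dots> = (\<Sum>(u1,v1)\<leftarrow>deltaList G1. \<Sum>(x,y)\<leftarrow>deltaList ts. \<Sum>(a2,b2)\<leftarrow>deltaList F'. \<Sum>(u2,v2)\<leftarrow>deltaList G2.
             pair x u1 * pair a2 v1 * (pair_gamma d y u2 * pair b2 v2))"
      by (simp add: split_def sum_list_swap[of _ "deltaList G2"])
    also have "\<dots> = (\<Sum>(x,y)\<leftarrow>deltaList ts. \<Sum>(a2,b2)\<leftarrow>deltaList F'. \<Sum>(u2,v2)\<leftarrow>deltaList G2. \<Sum>(u1,v1)\<leftarrow>deltaList G1.
             pair x u1 * pair a2 v1 * (pair_gamma d y u2 * pair b2 v2))"
      by (simp add: split_def sum_list_swap[of _ "deltaList G1"])
    also have "\<dots> = (\<Sum>(x,y)\<leftarrow>deltaList ts. \<Sum>(a2,b2)\<leftarrow>deltaList F'. pair (x@a2) G1 * pair (Node d y # b2) G2)"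
      by (simp add: pair_append_left pair_Cons split_def sum_list_distrib)
    also have "(\<Sum>(a2,b2)\<leftarrow>deltaList F'. pair (t#a2) G1 * pair b2 G2) + \<dots>
      = (\<Sum>(a,b)\<leftarrow>deltaList F. pair a G1 * pair b G2)"
      by (simp add: Cons t deltaList_Cons sum_list_tensor_list sum_list_cuts_Node split_def)
    finally show ?thesis .
  qed
qed

lemma fin_supp_zero[simp]: "fin_supp (\<lambda>_. 0)" by (simp add: fin_supp_def)

lemma fin_supp_add: "fin_supp x \<Longrightarrow> fin_supp y \<Longrightarrow> fin_supp (\<lambda>G. x G + y G)"
  unfolding fin_supp_def by (rule finite_subset[of _ "{F. x F \<noteq> 0} \<union> {F. y F \<noteq> 0}"]) auto

lemma fin_supp_scale: "fin_supp x \<Longrightarrow> fin_supp (\<lambda>G. c * x G)"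
  unfolding fin_supp_def by (rule finite_subset[of _ "{F. x F \<noteq> 0}"]) auto

lemma fin_supp_sum_list: "(\<And>i. i \<in> set L \<Longrightarrow> fin_supp (f i)) \<Longrightarrow> fin_supp (\<lambda>G. \<Sum>i\<leftarrow>L. f i G)"
proof (induction L)
  case Nil then show ?case by simp
next
  case (Cons a L)
  then show ?case using fin_supp_add[of "f a" "\<lambda>G. \<Sum>i\<leftarrow>L. f i G"] by simp
qed

lemma fin_supp_sum: "finite S \<Longrightarrow> (\<And>i. i \<in> S \<Longrightarrow> fin_supp (f i)) \<Longrightarrow> fin_supp (\<lambda>G. \<Sum>i\<in>S. f i G)"
proof (induction S rule: finite_induct)
  case empty then show ?case by simp
next
  case (insert a S)
  then show ?case using fin_supp_add[of "f a" "\<lambda>G. \<Sum>i\<in>S. f i G"] by simp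
qed

lemma fin_supp_if: "fin_supp x \<Longrightarrow> fin_supp (\<lambda>G. if P then x G else 0)"
  by (cases P) auto

lemma pairH_add:
  assumes "fin_supp x" "fin_supp y"
  shows "pairH (\<lambda>G. x G + y G) Z = pairH x Z + pairH y Z"
proof -
  let ?S = "supp x \<union> supp y"
  have fS: "finite ?S" using assms by (simp add: fin_supp_iff)
  have "pairH (\<lambda>G. x G + y G) Z = (\<Sum>F\<in>?S. (x F + y F) * pair F Z)"
    by (rule pairH_eq_sum[OF fS]) (auto simp: supp_def)
  also have "\<dots> = (\<Sum>F\<in>?S. x F * pair F Z) + (\<Sum>F\<in>?S. y F * pair F Z)"
    by (simp add: distrib_right sum.distrib)
  also have "\<dots> = pairH x Z + pairH y Z"
    using pairH_eq_sum[OF fS, of x Z] pairH_eq_sum[OF fS, of y Z] by auto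
  finally show ?thesis .
qed

lemma pairH_scale: "pairH (\<lambda>G. c * x G) Z = c * pairH x Z"
proof (cases "c = 0")
  case True then show ?thesis by (simp add: pairH_def)
next
  case False
  then have "supp (\<lambda>G. c * x G) = supp x" by (auto simp: supp_def)
  then show ?thesis by (simp add: pairH_supp sum_distrib_left mult.assoc)
qed

lemma pairH_zero[simp]: "pairH (\<lambda>_. 0) Z = 0" by (simp add: pairH_def)

lemma pairH_sum_list:
  "(\<And>i. i \<in> set L \<Longrightarrow> fin_supp (f i)) \<Longrightarrow> pairH (\<lambda>G. \<Sum>i\<leftarrow>L. f i G) Z = (\<Sum>i\<leftarrow>L. pairH (f i) Z)"
proof (induction L)
  case Nil then show ?case by simp
next
  case (Cons a L)
  have "pairH (\<lambda>G. \<Sum>i\<leftarrow>a#L. f i G) Z = pairH (\<lambda>G. f a G + (\<Sum>i\<leftarrow>L. f i G)) Z" by simp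
  also have "\<dots> = pairH (f a) Z + pairH (\<lambda>G. \<Sum>i\<leftarrow>L. f i G) Z"
    using Cons.prems by (intro pairH_add) (auto intro: fin_supp_sum_list)
  finally show ?case using Cons by simp
qed

lemma pairH_sum:
  "finite S \<Longrightarrow> (\<And>i. i \<in> S \<Longrightarrow> fin_supp (f i)) \<Longrightarrow> pairH (\<lambda>G. \<Sum>i\<in>S. f i G) Z = (\<Sum>i\<in>S. pairH (f i) Z)"
proof (induction S rule: finite_induct)
  case empty then show ?case by simp
next
  case (insert a S)
  have "pairH (\<lambda>G. \<Sum>i\<in>insert a S. f i G) Z = pairH (\<lambda>G. f a G + (\<Sum>i\<in>S. f i G)) Z"
    using insert by simp
  also have "\<dots> = pairH (f a) Z + pairH (\<lambda>G. \<Sum>i\<in>S. f i G) Z"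
    using insert by (intro pairH_add) (auto intro: fin_supp_sum)
  finally show ?case using insert by simp
qed

lemma pair_Nil_right: "pair F [] = (if F = [] then 1 else 0)"
proof (cases F)
  case Nil then show ?thesis by simp
next
  case (Cons t F')
  then show ?thesis by (cases t) (simp add: pair_Cons pair_gamma_def)
qed

lemma pairH_Nil: assumes fsx: "fin_supp x" shows "pairH x [] = x []"
proof (cases "x [] = 0")
  case True
  have "pairH x [] = (\<Sum>F\<in>{F. x F \<noteq> 0}. 0)"
    unfolding pairH_def by (rule sum.cong) (use True in \<open>auto simp: pair_Nil_right\<close>)
  then show ?thesis using True by simp
next
  case False
  have "pairH x [] = (\<Sum>F\<in>{F. x F \<noteq> 0}. if F = [] then x F else 0)"
    unfolding pairH_def by (rule sum.cong) (auto simp: pair_Nil_right)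
  also have "\<dots> = x []" using False fsx by (simp add: sum.delta' fin_supp_def)
  finally show ?thesis .
qed

lemma fin_supp_unitH[simp]: "fin_supp unitH"
  unfolding fin_supp_def unitH_def by (rule finite_subset[of _ "{[]}"]) auto

lemma pairH_unitH: "pairH unitH Z = (if Z = [] then 1 else 0)"
proof -
  have "pairH unitH Z = (\<Sum>F\<in>{[]}. unitH F * pair F Z)"
    by (rule pairH_eq_sum) (auto simp: unitH_def supp_def split: if_splits)
  then show ?thesis by (simp add: unitH_def pair_Nil)
qed

lemma sum_sum_list_swap: "(\<Sum>x\<in>S. \<Sum>y\<leftarrow>L. f x y) = (\<Sum>y\<leftarrow>L. \<Sum>x\<in>S. f x y)"
  by (induction L) (simp_all add: sum.distrib)

lemma splits_image: "(\<lambda>i. (take i G, drop i G)) ` {..length G} = {p. fst p @ snd p = G}"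
proof
  show "(\<lambda>i. (take i G, drop i G)) ` {..length G} \<subseteq> {p. fst p @ snd p = G}" by auto
  show "{p. fst p @ snd p = G} \<subseteq> (\<lambda>i. (take i G, drop i G)) ` {..length G}"
  proof
    fix p assume "p \<in> {p. fst p @ snd p = G}"
    then have "fst p @ snd p = G" by simp
    then have "p = (take (length (fst p)) G, drop (length (fst p)) G)" "length (fst p) \<in> {..length G}"
      by (auto simp: prod_eq_iff)
    then show "p \<in> (\<lambda>i. (take i G, drop i G)) ` {..length G}" by blast
  qed
qed

lemma finite_splits: "finite {p. fst p @ snd p = G}"
  using splits_image[of G] by (metis finite_atMost finite_imageI)

lemma multH_splits: "multH x y G = (\<Sum>p\<in>{p. fst p @ snd p = G}. x (fst p) * y (snd p))"
proof -
  have inj: "inj_on (\<lambda>i. (take i G, drop i G)) {..length G}"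
    by (rule inj_onI) (metis (no_types, lifting) atMost_iff length_take min.absorb2 prod.inject)
  show ?thesis unfolding multH_def splits_image[symmetric]
    by (simp add: sum.reindex[OF inj] atLeast0AtMost)
qed

lemma multH_expand:
  assumes "fin_supp x" "fin_supp y"
  shows "multH x y G = (\<Sum>A\<in>supp x. \<Sum>B\<in>supp y. if A@B = G then x A * y B else 0)"
proof -
  have fx: "finite (supp x)" and fy: "finite (supp y)" using assms by (simp_all add: fin_supp_iff)
  have "(\<Sum>A\<in>supp x. \<Sum>B\<in>supp y. if A@B = G then x A * y B else 0)
      = (\<Sum>p\<in>supp x \<times> supp y. if fst p @ snd p = G then x (fst p) * y (snd p) else 0)"
    by (simp add: sum.cartesian_product split_def)
  also have "\<dots> = (\<Sum>p\<in>(supp x \<times> supp y) \<inter> {p. fst p @ snd p = G}. x (fst p) * y (snd p))"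
    using fx fy by (simp add: sum.inter_filter Int_def)
  also have "\<dots> = (\<Sum>p\<in>{p. fst p @ snd p = G}. x (fst p) * y (snd p))"
    by (rule sum.mono_neutral_left) (auto simp: finite_splits supp_def)
  finally show ?thesis by (simp add: multH_splits)
qed

lemma supp_multH:
  assumes "fin_supp x" "fin_supp y"
  shows "supp (multH x y) \<subseteq> (\<lambda>p. fst p @ snd p) ` (supp x \<times> supp y)"
proof
  fix G assume "G \<in> supp (multH x y)"
  then have "(\<Sum>A\<in>supp x. \<Sum>B\<in>supp y. if A@B = G then x A * y B else 0) \<noteq> 0"
    using multH_expand[OF assms] by (simp add: supp_def)
  then obtain A where A: "A \<in> supp x" "(\<Sum>B\<in>supp y. if A@B = G then x A * y B else 0) \<noteq> 0"
    by (rule sum.not_neutral_contains_not_neutral)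
  from A(2) obtain B where B: "B \<in> supp y" "(if A@B = G then x A * y B else 0) \<noteq> 0"
    by (rule sum.not_neutral_contains_not_neutral)
  from A B have "A \<in> supp x" "B \<in> supp y" "A@B = G" by (auto split: if_splits)
  then show "G \<in> (\<lambda>p. fst p @ snd p) ` (supp x \<times> supp y)" by force
qed

lemma fin_supp_multH: "fin_supp x \<Longrightarrow> fin_supp y \<Longrightarrow> fin_supp (multH x y)"
  unfolding fin_supp_iff by (rule finite_subset[OF supp_multH]) (auto simp: fin_supp_iff)

lemma pairH_multH:
  assumes fsx: "fin_supp x" and fsy: "fin_supp y"
  shows "pairH (multH x y) Z = (\<Sum>(u,v)\<leftarrow>deltaList Z. pairH x u * pairH y v)"
proof -
  let ?U = "(\<lambda>p. fst p @ snd p) ` (supp x \<times> supp y)"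
  have fx: "finite (supp x)" and fy: "finite (supp y)" using assms by (simp_all add: fin_supp_iff)
  have fU: "finite ?U" using fx fy by simp
  have "pairH (multH x y) Z = (\<Sum>G\<in>?U. multH x y G * pair G Z)"
    by (rule pairH_eq_sum[OF fU supp_multH[OF assms]])
  also have "\<dots> = (\<Sum>G\<in>?U. \<Sum>A\<in>supp x. \<Sum>B\<in>supp y. if A@B = G then x A * y B * pair G Z else 0)"
    by (simp add: multH_expand[OF assms] sum_distrib_right if_zero_mult)
  also have "\<dots> = (\<Sum>A\<in>supp x. \<Sum>B\<in>supp y. \<Sum>G\<in>?U. if A@B = G then x A * y B * pair G Z else 0)"
    by (simp add: sum.swap[of _ ?U])
  also have "\<dots> = (\<Sum>A\<in>supp x. \<Sum>B\<in>supp y. x A * y B * pair (A@B) Z)"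
  proof (intro sum.cong refl)
    fix A B assume "A \<in> supp x" "B \<in> supp y"
    then have "A@B \<in> ?U" by force
    then show "(\<Sum>G\<in>?U. if A@B = G then x A * y B * pair G Z else 0) = x A * y B * pair (A@B) Z"
      using fU by (simp add: sum.delta)
  qed
  also have "\<dots> = (\<Sum>A\<in>supp x. \<Sum>B\<in>supp y. \<Sum>(u,v)\<leftarrow>deltaList Z. x A * pair A u * (y B * pair B v))"
    by (simp add: pair_append_left split_def sum_list_distrib mult_ac)
  also have "\<dots> = (\<Sum>(u,v)\<leftarrow>deltaList Z. \<Sum>A\<in>supp x. \<Sum>B\<in>supp y. x A * pair A u * (y B * pair B v))"
    by (simp add: sum_sum_list_swap split_def)
  also have "\<dots> = (\<Sum>(u,v)\<leftarrow>deltaList Z. pairH x u * pairH y v)"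
    by (simp add: pairH_supp split_def sum_product)
  finally show ?thesis .
qed

lemma multH_assoc:
  assumes "fin_supp x" "fin_supp y" "fin_supp z"
  shows "multH (multH x y) z = multH x (multH y z)"
proof (rule eq_by_pairH)
  show "fin_supp (multH (multH x y) z)" "fin_supp (multH x (multH y z))"
    using assms by (simp_all add: fin_supp_multH)
  fix W
  have "pairH (multH (multH x y) z) W = (\<Sum>(u,v)\<leftarrow>deltaList W. \<Sum>(a,b)\<leftarrow>deltaList u. pairH x a * pairH y b * pairH z v)"
    using assms by (simp add: pairH_multH fin_supp_multH split_def sum_list_distrib)
  also have "\<dots> = (\<Sum>(u,v)\<leftarrow>deltaList W. \<Sum>(a,b)\<leftarrow>deltaList v. pairH x u * pairH y a * pairH z b)"
    by (rule deltaList_coassoc)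
  also have "\<dots> = pairH (multH x (multH y z)) W"
    using assms by (simp add: pairH_multH fin_supp_multH split_def sum_list_distrib mult.assoc)
  finally show "pairH (multH (multH x y) z) W = pairH (multH x (multH y z)) W" .
qed

lemma multH_unit_left:
  assumes "fin_supp x" shows "multH unitH x = x"
proof (rule eq_by_pairH)
  show "fin_supp (multH unitH x)" using assms by (simp add: fin_supp_multH)
  show "fin_supp x" by fact
  fix W
  show "pairH (multH unitH x) W = pairH x W"
    using assms sum_deltaList_left_Nil[of "\<lambda>v. pairH x v" W]
    by (simp add: pairH_multH pairH_unitH split_def if_zero_mult cong: if_cong)
qed

lemma multH_unit_right:
  assumes "fin_supp x" shows "multH x unitH = x"
proof (rule eq_by_pairH)
  show "fin_supp (multH x unitH)" using assms by (simp add: fin_supp_multH)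
  show "fin_supp x" by fact
  fix W
  show "pairH (multH x unitH) W = pairH x W"
    using assms sum_deltaList_right_Nil[of "\<lambda>v. pairH x v" W]
    by (simp add: pairH_multH pairH_unitH split_def mult_if_zero cong: if_cong)
qed

definition pairT :: "'d tvec \<Rightarrow> 'd forest \<Rightarrow> 'd forest \<Rightarrow> rat" where
  "pairT w X Y = (\<Sum>CD\<in>supp w. w CD * pair (fst CD) X * pair (snd CD) Y)"

lemma pairT_eq_sum: "finite V \<Longrightarrow> supp w \<subseteq> V \<Longrightarrow> pairT w X Y = (\<Sum>CD\<in>V. w CD * pair (fst CD) X * pair (snd CD) Y)"
  unfolding pairT_def by (rule sum.mono_neutral_left) (auto simp: supp_def)

lemma sum_count_list_mult:
  "finite V \<Longrightarrow> set L \<subseteq> V \<Longrightarrow> (\<Sum>CD\<in>V. of_nat (count_list L CD) * f CD) = (\<Sum>c\<leftarrow>L. (f c :: rat))"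
proof (induction L)
  case Nil then show ?case by simp
next
  case (Cons a L)
  have "(\<Sum>CD\<in>V. of_nat (count_list (a#L) CD) * f CD) = (\<Sum>CD\<in>V. of_nat (count_list L CD) * f CD + (if a = CD then f CD else 0))"
    by (rule sum.cong) (auto simp: distrib_right)
  also have "\<dots> = (\<Sum>CD\<in>V. of_nat (count_list L CD) * f CD) + f a"
    using Cons.prems by (simp add: sum.distrib sum.delta)
  finally show ?case using Cons by simp
qed

lemma supp_deltaH: "fin_supp z \<Longrightarrow> supp (deltaH z) \<subseteq> (\<Union>F\<in>supp z. set (deltaList F))"
proof
  fix CD assume "CD \<in> supp (deltaH z)"
  then have "(\<Sum>F\<in>supp z. z F * of_nat (count_list (deltaList F) CD)) \<noteq> 0"
    by (simp add: supp_def deltaH_def split_def)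
  then obtain F where "F \<in> supp z" "z F * of_nat (count_list (deltaList F) CD) \<noteq> 0"
    by (rule sum.not_neutral_contains_not_neutral)
  then have "F \<in> supp z" "CD \<in> set (deltaList F)" by (auto simp: count_list_0_iff)
  then show "CD \<in> (\<Union>F\<in>supp z. set (deltaList F))" by blast
qed

lemma finite_supp_deltaH: "fin_supp z \<Longrightarrow> finite (supp (deltaH z))"
  by (rule finite_subset[OF supp_deltaH]) (auto simp: fin_supp_iff)

lemma pairT_deltaH:
  assumes fs: "fin_supp z"
  shows "pairT (deltaH z) X Y = pairH z (X@Y)"
proof -
  let ?V = "\<Union>F\<in>supp z. set (deltaList F)"
  have fV: "finite ?V" using fs by (simp add: fin_supp_iff)
  have "pairT (deltaH z) X Y = (\<Sum>CD\<in>?V. deltaH z CD * pair (fst CD) X * pair (snd CD) Y)"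
    by (rule pairT_eq_sum[OF fV supp_deltaH[OF fs]])
  also have "\<dots> = (\<Sum>CD\<in>?V. \<Sum>F\<in>supp z. z F * (of_nat (count_list (deltaList F) CD) * (pair (fst CD) X * pair (snd CD) Y)))"
    by (rule sum.cong[OF refl]) (simp add: deltaH_def split_def supp_def sum_distrib_right sum_distrib_left mult_ac)
  also have "\<dots> = (\<Sum>F\<in>supp z. z F * (\<Sum>CD\<in>?V. of_nat (count_list (deltaList F) CD) * (pair (fst CD) X * pair (snd CD) Y)))"
    by (simp add: sum.swap[of _ ?V] sum_distrib_left)
  also have "\<dots> = (\<Sum>F\<in>supp z. z F * (\<Sum>(a,b)\<leftarrow>deltaList F. pair a X * pair b Y))"
  proof (intro sum.cong refl arg_cong[where f="\<lambda>u. _ * u"])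
    fix F assume "F \<in> supp z"
    then have "set (deltaList F) \<subseteq> ?V" by blast
    from sum_count_list_mult[OF fV this] show "(\<Sum>CD\<in>?V. of_nat (count_list (deltaList F) CD) * (pair (fst CD) X * pair (snd CD) Y))
        = (\<Sum>(a,b)\<leftarrow>deltaList F. pair a X * pair b Y)" by (simp add: split_def)
  qed
  also have "\<dots> = pairH z (X@Y)" by (simp add: pairH_supp pair_append_right)
  finally show ?thesis .
qed

lemma pairT_tensors:
  assumes fs: "\<And>i. i \<in> set M \<Longrightarrow> fin_supp (fa i) \<and> fin_supp (fb i)"
  defines "w \<equiv> (\<lambda>CD. \<Sum>i\<leftarrow>M. fa i (fst CD) * fb i (snd CD))"
  shows "finite (supp w)" "pairT w X Y = (\<Sum>i\<leftarrow>M. pairH (fa i) X * pairH (fb i) Y)"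
proof -
  let ?V = "\<Union>i\<in>set M. supp (fa i) \<times> supp (fb i)"
  have fV: "finite ?V" using fs by (auto simp: fin_supp_iff)
  have sV: "supp w \<subseteq> ?V"
  proof
    fix CD assume "CD \<in> supp w"
    then have "(\<Sum>i\<leftarrow>M. fa i (fst CD) * fb i (snd CD)) \<noteq> 0" by (simp add: w_def supp_def)
    then obtain i where "i \<in> set M" "fa i (fst CD) * fb i (snd CD) \<noteq> 0"
      using sum_list_nonzero by blast
    then show "CD \<in> ?V" by (auto simp: supp_def mem_Times_iff)
  qed
  show "finite (supp w)" using finite_subset[OF sV fV] .
  have "pairT w X Y = (\<Sum>CD\<in>?V. w CD * pair (fst CD) X * pair (snd CD) Y)"
    by (rule pairT_eq_sum[OF fV sV])
  also have "\<dots> = (\<Sum>i\<leftarrow>M. \<Sum>CD\<in>?V. fa i (fst CD) * pair (fst CD) X * (fb i (snd CD) * pair (snd CD) Y))"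
    by (simp add: w_def sum_sum_list_swap sum_list_distrib mult_ac)
  also have "\<dots> = (\<Sum>i\<leftarrow>M. pairH (fa i) X * pairH (fb i) Y)"
  proof (rule sum_map_cong)
    fix i assume i: "i \<in> set M"
    have fab: "finite (supp (fa i))" "finite (supp (fb i))" using fs[OF i] by (auto simp: fin_supp_iff)
    have "(\<Sum>CD\<in>?V. fa i (fst CD) * pair (fst CD) X * (fb i (snd CD) * pair (snd CD) Y))
        = (\<Sum>CD\<in>supp (fa i) \<times> supp (fb i). fa i (fst CD) * pair (fst CD) X * (fb i (snd CD) * pair (snd CD) Y))"
      by (rule sum.mono_neutral_right[OF fV]) (use i in \<open>auto simp: supp_def\<close>)
    also have "\<dots> = pairH (fa i) X * pairH (fb i) Y"
      by (simp add: sum.cartesian_product split_def pairH_supp sum_product)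
    finally show "(\<Sum>CD\<in>?V. fa i (fst CD) * pair (fst CD) X * (fb i (snd CD) * pair (snd CD) Y))
        = pairH (fa i) X * pairH (fb i) Y" .
  qed
  finally show "pairT w X Y = (\<Sum>i\<leftarrow>M. pairH (fa i) X * pairH (fb i) Y)" .
qed

lemma pairH_pair_right_slice:
  fixes w :: "'d tvec" and Y :: "'d forest"
  assumes fw: "finite (supp w)"
  defines "v \<equiv> (\<lambda>A. \<Sum>D\<in>snd ` supp w. w (A,D) * pair D Y)"
  shows "fin_supp v" "pairH v X = pairT w X Y"
proof -
  let ?AS = "fst ` supp w" and ?DS = "snd ` supp w"
  have fA: "finite ?AS" and fD: "finite ?DS" using fw by auto
  have sv: "supp v \<subseteq> ?AS"
  proof
    fix A assume "A \<in> supp v"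
    then obtain D where "w (A,D) * pair D Y \<noteq> 0"
      unfolding v_def supp_def by (auto elim: sum.not_neutral_contains_not_neutral)
    then show "A \<in> ?AS" by (force simp: supp_def)
  qed
  then show "fin_supp v" unfolding fin_supp_iff using fA finite_subset by blast
  have "pairH v X = (\<Sum>A\<in>?AS. (\<Sum>D\<in>?DS. w (A,D) * pair D Y) * pair A X)"
    unfolding v_def by (rule pairH_eq_sum[OF fA]) (use sv in \<open>simp add: v_def\<close>)
  also have "\<dots> = (\<Sum>A\<in>?AS. \<Sum>D\<in>?DS. w (A,D) * pair A X * pair D Y)"
    by (simp add: sum_distrib_right sum_distrib_left mult_ac)
  also have "\<dots> = (\<Sum>CD\<in>?AS \<times> ?DS. w CD * pair (fst CD) X * pair (snd CD) Y)"
    by (simp add: sum.cartesian_product split_def)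
  also have "\<dots> = pairT w X Y"
    by (rule pairT_eq_sum[symmetric]) (use fA fD in force)+
  finally show "pairH v X = pairT w X Y" .
qed

lemma tensor_nondeg:
  assumes fw: "finite (supp w)" and z: "\<And>X Y. pairT w X Y = 0"
  shows "w = (\<lambda>_. 0)"
proof (rule ext, clarify)
  fix A D
  let ?DS = "snd ` supp w"
  have "(\<lambda>A. \<Sum>D\<in>?DS. w (A,D) * pair D Y) = (\<lambda>_. 0)" for Y
    using pairH_pair_right_slice[OF fw] z by (intro pairH_nondegenerate) simp_all
  then have vY: "(\<Sum>D\<in>?DS. w (A,D) * pair D Y) = 0" for Y by (metis (no_types))
  have "(\<lambda>D. w (A,D)) = (\<lambda>_. 0)"
  proof (rule pairH_nondegenerate)
    have sub: "supp (\<lambda>D. w (A,D)) \<subseteq> ?DS" by (force simp: supp_def)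
    then show "fin_supp (\<lambda>D. w (A,D))" unfolding fin_supp_iff using fw finite_subset by blast
    show "pairH (\<lambda>D. w (A,D)) Y = 0" for Y
      using pairH_eq_sum[OF _ sub] fw vY by simp
  qed
  then show "w (A,D) = 0" by (simp add: fun_eq_iff)
qed

lemma pairT_diff:
  assumes "finite (supp w1)" "finite (supp w2)"
  shows "pairT (\<lambda>CD. w1 CD - w2 CD) X Y = pairT w1 X Y - pairT w2 X Y"
proof -
  let ?V = "supp w1 \<union> supp w2"
  have fV: "finite ?V" using assms by simp
  have "pairT (\<lambda>CD. w1 CD - w2 CD) X Y = (\<Sum>CD\<in>?V. (w1 CD - w2 CD) * pair (fst CD) X * pair (snd CD) Y)"
    by (rule pairT_eq_sum[OF fV]) (auto simp: supp_def)
  also have "\<dots> = (\<Sum>CD\<in>?V. w1 CD * pair (fst CD) X * pair (snd CD) Y) - (\<Sum>CD\<in>?V. w2 CD * pair (fst CD) X * pair (snd CD) Y)"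
    by (simp add: left_diff_distrib sum_subtractf)
  also have "\<dots> = pairT w1 X Y - pairT w2 X Y"
    using pairT_eq_sum[OF fV, of w1] pairT_eq_sum[OF fV, of w2] by auto
  finally show ?thesis .
qed

lemma tensor_eq:
  assumes "finite (supp w1)" "finite (supp w2)" "\<And>X Y. pairT w1 X Y = pairT w2 X Y"
  shows "w1 = w2"
proof -
  have f: "finite (supp (\<lambda>CD. w1 CD - w2 CD))"
    by (rule finite_subset[of _ "supp w1 \<union> supp w2"]) (use assms in \<open>auto simp: supp_def\<close>)
  have "(\<lambda>CD. w1 CD - w2 CD) = (\<lambda>_. 0)"
    by (rule tensor_nondeg[OF f]) (simp add: pairT_diff assms)
  then show ?thesis by (simp add: fun_eq_iff)
qed

lemma deltaH_tensor_iff: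
  assumes fz: "fin_supp z" and fs: "\<And>i. i \<in> set M \<Longrightarrow> fin_supp (fa i) \<and> fin_supp (fb i)"
  shows "deltaH z = (\<lambda>CD. \<Sum>i\<leftarrow>M. fa i (fst CD) * fb i (snd CD)) \<longleftrightarrow>
         (\<forall>X Y. pairH z (X@Y) = (\<Sum>i\<leftarrow>M. pairH (fa i) X * pairH (fb i) Y))"
proof
  assume e: "deltaH z = (\<lambda>CD. \<Sum>i\<leftarrow>M. fa i (fst CD) * fb i (snd CD))"
  show "\<forall>X Y. pairH z (X@Y) = (\<Sum>i\<leftarrow>M. pairH (fa i) X * pairH (fb i) Y)"
  proof (intro allI)
    fix X Y
    have "pairH z (X@Y) = pairT (deltaH z) X Y" by (simp add: pairT_deltaH[OF fz])
    also have "\<dots> = pairT (\<lambda>CD. \<Sum>i\<leftarrow>M. fa i (fst CD) * fb i (snd CD)) X Y" by (simp only: e)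
    also have "\<dots> = (\<Sum>i\<leftarrow>M. pairH (fa i) X * pairH (fb i) Y)" by (rule pairT_tensors(2)[where M=M and fa=fa and fb=fb, OF fs])
    finally show "pairH z (X@Y) = (\<Sum>i\<leftarrow>M. pairH (fa i) X * pairH (fb i) Y)" .
  qed
next
  assume h: "\<forall>X Y. pairH z (X@Y) = (\<Sum>i\<leftarrow>M. pairH (fa i) X * pairH (fb i) Y)"
  show "deltaH z = (\<lambda>CD. \<Sum>i\<leftarrow>M. fa i (fst CD) * fb i (snd CD))"
  proof (rule tensor_eq)
    show "finite (supp (deltaH z))" by (rule finite_supp_deltaH[OF fz])
    show "finite (supp (\<lambda>CD. \<Sum>i\<leftarrow>M. fa i (fst CD) * fb i (snd CD)))" by (rule pairT_tensors(1)[where M=M and fa=fa and fb=fb, OF fs])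
    fix X Y show "pairT (deltaH z) X Y = pairT (\<lambda>CD. \<Sum>i\<leftarrow>M. fa i (fst CD) * fb i (snd CD)) X Y"
      using h pairT_tensors(2)[where M=M and fa=fa and fb=fb and X=X and Y=Y, OF fs] pairT_deltaH[OF fz, of X Y] by simp
  qed
qed

lemma finite_pairH_supp:
  assumes "fin_supp x" shows "finite {F. pairH x F \<noteq> 0}"
proof (rule finite_subset)
  show "{F. pairH x F \<noteq> 0} \<subseteq> (\<Union>H\<in>supp x. {G. pair H G \<noteq> 0})"
  proof
    fix F assume "F \<in> {F. pairH x F \<noteq> 0}"
    then have "(\<Sum>H\<in>supp x. x H * pair H F) \<noteq> 0" by (simp add: pairH_supp)
    then obtain H where "H \<in> supp x" "x H * pair H F \<noteq> 0" by (rule sum.not_neutral_contains_not_neutral)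
    then show "F \<in> (\<Union>H\<in>supp x. {G. pair H G \<noteq> 0})" by auto
  qed
  show "finite (\<Union>H\<in>supp x. {G. pair H G \<noteq> 0})"
    using assms by (simp add: fin_supp_iff finite_pair_supp)
qed

lemma finite_pairH_supp_tree:
  assumes "fin_supp p" shows "finite {t. pairH p [t] \<noteq> 0}"
proof (rule finite_subset)
  show "{t. pairH p [t] \<noteq> 0} \<subseteq> hd ` {F. pairH p F \<noteq> 0}" by force
  show "finite (hd ` {F. pairH p F \<noteq> 0})" using finite_pairH_supp[OF assms] by simp
qed

lemma topH_alt:
  "topH x p = (\<lambda>G. \<Sum>Ft\<in>{F. pairH x F \<noteq> 0} \<times> {t. pairH p [t] \<noteq> 0}.
      (\<lambda>G. (pairH x (fst Ft) * pairH p [snd Ft]) * eb (fst Ft @ [snd Ft]) G) G)"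
  by (simp add: topH_def)

lemma fin_supp_topH:
  assumes "fin_supp x" "fin_supp p" shows "fin_supp (topH x p)"
  unfolding topH_alt
  by (rule fin_supp_sum) (use finite_pairH_supp[OF assms(1)] finite_pairH_supp_tree[OF assms(2)] in
      \<open>auto intro: fin_supp_scale fin_supp_eb\<close>)

lemma pairH_topH:
  assumes fx: "fin_supp x" and fp: "fin_supp p"
  shows "pairH (topH x p) G = (if G = [] then 0 else pairH x (butlast G) * pairH p [last G])"
proof -
  let ?S = "{F. pairH x F \<noteq> 0} \<times> {t. pairH p [t] \<noteq> 0}"
  have fS: "finite ?S" using finite_pairH_supp[OF fx] finite_pairH_supp_tree[OF fp] by simp
  have "pairH (topH x p) G = (\<Sum>Ft\<in>?S. pairH (\<lambda>G. (pairH x (fst Ft) * pairH p [snd Ft]) * eb (fst Ft @ [snd Ft]) G) G)"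
    unfolding topH_alt by (rule pairH_sum[OF fS]) (auto intro: fin_supp_scale fin_supp_eb)
  also have "\<dots> = (\<Sum>Ft\<in>?S. if Ft = (butlast G, last G) \<and> G \<noteq> [] then pairH x (fst Ft) * pairH p [snd Ft] else 0)"
  proof (rule sum.cong[OF refl])
    fix Ft :: "'a forest \<times> 'a ptree"
    have "(G = fst Ft @ [snd Ft]) = (Ft = (butlast G, last G) \<and> G \<noteq> [])"
      by (cases Ft) auto
    then show "pairH (\<lambda>G. (pairH x (fst Ft) * pairH p [snd Ft]) * eb (fst Ft @ [snd Ft]) G) G =
      (if Ft = (butlast G, last G) \<and> G \<noteq> [] then pairH x (fst Ft) * pairH p [snd Ft] else 0)"
      by (simp add: pairH_scale pairH_eb)
  qed
  also have "\<dots> = (if G = [] then 0 else pairH x (butlast G) * pairH p [last G])"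
    using fS by (auto simp: sum.delta')
  finally show ?thesis .
qed

lemma prim_iff_pairH:
  "prim p \<longleftrightarrow> fin_supp p \<and> (\<forall>X Y. pairH p (X@Y) =
      pairH p X * (if Y = [] then 1 else 0) + (if X = [] then 1 else 0) * pairH p Y)"
proof (cases "fin_supp p")
  case False then show ?thesis by (simp add: prim_def)
next
  case True
  have t: "(\<lambda>(A, B). (if B = [] then p A else 0) + (if A = [] then p B else 0))
        = (\<lambda>CD. \<Sum>i\<leftarrow>[(p,unitH),(unitH,p)]. fst i (fst CD) * snd i (snd CD))"
    by (auto simp: fun_eq_iff unitH_def)
  have "prim p \<longleftrightarrow> deltaH p = (\<lambda>CD. \<Sum>i\<leftarrow>[(p,unitH),(unitH,p)]. fst i (fst CD) * snd i (snd CD))"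
    using True by (simp add: prim_def t)
  also have "\<dots> \<longleftrightarrow> (\<forall>X Y. pairH p (X@Y) = (\<Sum>i\<leftarrow>[(p,unitH),(unitH,p)]. pairH (fst i) X * pairH (snd i) Y))"
    by (rule deltaH_tensor_iff) (use True in auto)
  finally show ?thesis using True by (simp add: pairH_unitH)
qed

lemma prim_fin_supp: "prim p \<Longrightarrow> fin_supp p" by (simp add: prim_def)

lemma prim_pairH_append: "prim p \<Longrightarrow> pairH p (X@Y) =
      pairH p X * (if Y = [] then 1 else 0) + (if X = [] then 1 else 0) * pairH p Y"
  by (simp add: prim_iff_pairH)

lemma prim_pairH_Nil: "prim p \<Longrightarrow> pairH p [] = 0"
  using prim_pairH_append[of p "[]" "[]"] by simp

lemma prim_pairH_length: "prim p \<Longrightarrow> length G \<noteq> 1 \<Longrightarrow> pairH p G = 0"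
proof -
  assume pp: "prim p" and l: "length G \<noteq> 1"
  show ?thesis
  proof (cases G)
    case Nil then show ?thesis using prim_pairH_Nil[OF pp] by simp
  next
    case (Cons t G')
    with l have "G' \<noteq> []" by auto
    then show ?thesis using prim_pairH_append[OF pp, of "[t]" G'] Cons by simp
  qed
qed

lemma pairH_topH_unit:
  assumes "prim p" shows "pairH (topH unitH p) Y = pairH p Y"
proof -
  have fp: "fin_supp p" using assms by (rule prim_fin_supp)
  show ?thesis
  proof (cases Y rule: rev_cases)
    case Nil then show ?thesis using prim_pairH_Nil[OF assms] by (simp add: pairH_topH[OF fin_supp_unitH fp])
  next
    case (snoc Y' y)
    show ?thesis
    proof (cases "Y' = []")
      case True then show ?thesis using snoc by (simp add: pairH_topH[OF fin_supp_unitH fp] pairH_unitH)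
    next
      case False
      then have "length Y \<noteq> 1" using snoc by simp
      then show ?thesis using snoc False prim_pairH_length[OF assms]
        by (simp add: pairH_topH[OF fin_supp_unitH fp] pairH_unitH)
    qed
  qed
qed

lemma sum_list_const0[simp]: "(\<Sum>x\<leftarrow>xs. (0::'a::comm_monoid_add)) = 0"
  by (induction xs) auto

lemma sum_list_zero': "(\<And>x. x \<in> set xs \<Longrightarrow> f x = 0) \<Longrightarrow> (\<Sum>x\<leftarrow>xs. f x) = (0::'a::comm_monoid_add)"
  by (induction xs) auto

definition cut_top_sum :: "('d forest \<Rightarrow> 'd hvec) \<Rightarrow> ('d ptree \<Rightarrow> 'd hvec) \<Rightarrow> 'd ptree \<Rightarrow> 'd hvec" where
  "cut_top_sum \<Phi> P t = (\<lambda>G. sum_list (map (\<lambda>ab. if fst ab \<noteq> [] \<and> snd ab \<noteq> []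
       then topH (\<Phi> (fst ab)) (P (hd (snd ab))) G else 0) (cuts t)))"

text \<open>Delta (Phi F) = (Phi \<otimes> Phi) (Delta F), paired with all X \<otimes> Y; equivalent to the
identity itself by deltaH_hom_iff_coprod_compat.\<close>

definition coprod_compat :: "('d forest \<Rightarrow> 'd hvec) \<Rightarrow> 'd forest \<Rightarrow> bool" where
  "coprod_compat \<Phi> F \<longleftrightarrow> (\<forall>X Y. pairH (\<Phi> F) (X@Y) = (\<Sum>ab\<leftarrow>deltaList F. pairH (\<Phi> (fst ab)) X * pairH (\<Phi> (snd ab)) Y))"

lemma admissible_cut_root_single: "(a,b) \<in> set (cuts t) \<Longrightarrow> b \<noteq> [] \<Longrightarrow> b = [hd b]"
  by (cases t) (auto simp: cuts_Node_set)

lemma admissible_cut_smaller: "(a,b) \<in> set (cuts t) \<Longrightarrow> a \<noteq> [] \<Longrightarrow> b \<noteq> [] \<Longrightarrow> nv (hd b) < nv t \<and> nvF a < nv t \<and> nvF b < nv t"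
proof -
  assume ab: "(a,b) \<in> set (cuts t)" and a: "a \<noteq> []" and b: "b \<noteq> []"
  have "nvF a + nvF b = nv t" using cuts_nv[OF ab] by simp
  moreover have "nvF a > 0" "nvF b > 0" using a b by (auto simp: neq0_conv[symmetric])
  moreover have "nvF b = nv (hd b)" using admissible_cut_root_single[OF ab b] by (metis nvF_Cons nvF_Nil add_0_right)
  ultimately show ?thesis by linarith
qed

lemma fin_supp_cut_top_sum:
  assumes "\<And>F. fin_supp (\<Phi> F)" "\<And>s. fin_supp (P s)"
  shows "fin_supp (cut_top_sum \<Phi> P t)"
  unfolding cut_top_sum_def by (rule fin_supp_sum_list) (auto intro: fin_supp_if fin_supp_topH assms)

lemma pairH_cut_top_sum:
  assumes "\<And>F. fin_supp (\<Phi> F)" "\<And>s. fin_supp (P s)"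
  shows "pairH (cut_top_sum \<Phi> P t) W = (\<Sum>ab\<leftarrow>cuts t. if fst ab \<noteq> [] \<and> snd ab \<noteq> [] then pairH (topH (\<Phi> (fst ab)) (P (hd (snd ab)))) W else 0)"
proof -
  have "pairH (cut_top_sum \<Phi> P t) W = (\<Sum>ab\<leftarrow>cuts t. pairH (\<lambda>G. if fst ab \<noteq> [] \<and> snd ab \<noteq> [] then topH (\<Phi> (fst ab)) (P (hd (snd ab))) G else 0) W)"
    unfolding cut_top_sum_def by (rule pairH_sum_list) (auto intro: fin_supp_if fin_supp_topH assms)
  also have "\<dots> = (\<Sum>ab\<leftarrow>cuts t. if fst ab \<noteq> [] \<and> snd ab \<noteq> [] then pairH (topH (\<Phi> (fst ab)) (P (hd (snd ab)))) W else 0)"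
    by (rule sum_map_cong) auto
  finally show ?thesis .
qed

lemma pairH_cut_top_sum_Nil:
  assumes "\<And>F. fin_supp (\<Phi> F)" "\<And>s. fin_supp (P s)"
  shows "pairH (cut_top_sum \<Phi> P t) [] = 0"
  by (simp add: pairH_cut_top_sum[OF assms] pairH_topH[OF assms] cong: if_cong)

lemma pairH_topH_append:
  fixes \<Phi> :: "'d forest \<Rightarrow> 'd hvec"
  assumes fsF: "\<And>F. fin_supp (\<Phi> F)" and Phi0: "\<Phi> [] = unitH"
    and cb: "coprod_compat \<Phi> a" and p: "prim p" and a: "a \<noteq> []" and Y: "Y \<noteq> []"
  shows "pairH (topH (\<Phi> a) p) (X@Y) = (if X = [] then 1 else 0) * pairH (topH (\<Phi> a) p) Y
      + pairH (\<Phi> a) X * pairH p Y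
      + (\<Sum>(x,y)\<leftarrow>deltaList a. if x \<noteq> [] \<and> y \<noteq> [] then pairH (\<Phi> x) X * pairH (topH (\<Phi> y) p) Y else 0)"
proof -
  have fsp: "fin_supp p" using p by (rule prim_fin_supp)
  note ctop = pairH_topH[OF fsF fsp]
  define h where "h x y = pairH (\<Phi> x) X * pairH (topH (\<Phi> y) p) Y" for x y
  have "pairH (topH (\<Phi> a) p) (X@Y) = pairH (\<Phi> a) (X @ butlast Y) * pairH p [last Y]"
    using Y by (simp add: ctop butlast_append)
  also have "\<dots> = (\<Sum>(x,y)\<leftarrow>deltaList a. pairH (\<Phi> x) X * (pairH (\<Phi> y) (butlast Y) * pairH p [last Y]))"
    using cb by (simp add: coprod_compat_def split_def sum_list_distrib mult.assoc)
  also have "\<dots> = (\<Sum>(x,y)\<leftarrow>deltaList a. h x y)"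
    using Y by (simp add: h_def ctop)
  also have "\<dots> = (\<Sum>(x,y)\<leftarrow>deltaList a. if x = [] then h [] y else 0)
      + (\<Sum>(x,y)\<leftarrow>deltaList a. if y = [] then (if x \<noteq> [] then h x [] else 0) else 0)
      + (\<Sum>(x,y)\<leftarrow>deltaList a. if x \<noteq> [] \<and> y \<noteq> [] then h x y else 0)"
  proof -
    have hsplit: "h x y = (if x = [] then h [] y else 0) + (if y = [] then (if x \<noteq> [] then h x [] else 0) else 0)
        + (if x \<noteq> [] \<and> y \<noteq> [] then h x y else 0)" for x y
      by auto
    show ?thesis by (subst hsplit) (simp add: split_def sum_list_addf)
  qed
  also have "(\<Sum>(x,y)\<leftarrow>deltaList a. if x = [] then h [] y else 0) = h [] a"
    by (rule sum_deltaList_left_Nil)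
  also have "(\<Sum>(x,y)\<leftarrow>deltaList a. if y = [] then (if x \<noteq> [] then h x [] else 0) else 0) = h a []"
    using sum_deltaList_right_Nil[of "\<lambda>x. if x \<noteq> [] then h x [] else 0" a] a by simp
  finally show ?thesis
    using p by (simp add: h_def Phi0 pairH_unitH pairH_topH_unit cong: if_cong)
qed

text \<open>The terms of the last sum above, summed over the admissible cuts of t, are
regrouped by coassociativity into the inner cuts of the pruned subtrees.\<close>

lemma sum_admissible_topH_regroup:
  fixes \<Phi> :: "'d forest \<Rightarrow> 'd hvec" and P :: "'d ptree \<Rightarrow> 'd hvec"
  assumes fsF: "\<And>F. fin_supp (\<Phi> F)" and fsP: "\<And>s. fin_supp (P s)"
  shows "(\<Sum>(a,b)\<leftarrow>cuts t. if a \<noteq> [] \<and> b \<noteq> [] then (\<Sum>(x,y)\<leftarrow>deltaList a.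
            if x \<noteq> [] \<and> y \<noteq> [] then pairH (\<Phi> x) X * pairH (topH (\<Phi> y) (P (hd b))) Y else 0) else 0)
       = (\<Sum>(a,b)\<leftarrow>cuts t. if a \<noteq> [] \<and> b \<noteq> [] then pairH (\<Phi> a) X * pairH (cut_top_sum \<Phi> P (hd b)) Y else 0)"
proof -
  define g where "g x y z = (if x \<noteq> [] \<and> y \<noteq> [] \<and> z \<noteq> []
    then pairH (\<Phi> x) X * pairH (topH (\<Phi> y) (P (hd z))) Y else 0)" for x y z
  have "(\<Sum>(a,b)\<leftarrow>cuts t. if a \<noteq> [] \<and> b \<noteq> [] then (\<Sum>(x,y)\<leftarrow>deltaList a.
            if x \<noteq> [] \<and> y \<noteq> [] then pairH (\<Phi> x) X * pairH (topH (\<Phi> y) (P (hd b))) Y else 0) else 0)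
      = (\<Sum>(a,b)\<leftarrow>deltaList [t]. \<Sum>(x,y)\<leftarrow>deltaList a. g x y b)"
    unfolding deltaList_single by (rule sum_map_cong) (auto simp: g_def split_def)
  also have "\<dots> = (\<Sum>(a,b)\<leftarrow>deltaList [t]. \<Sum>(x,y)\<leftarrow>deltaList b. g a x y)"
    by (rule deltaList_coassoc)
  also have "\<dots> = (\<Sum>(a,b)\<leftarrow>cuts t. if a \<noteq> [] \<and> b \<noteq> [] then pairH (\<Phi> a) X * pairH (cut_top_sum \<Phi> P (hd b)) Y else 0)"
    unfolding deltaList_single
  proof (rule sum_map_cong, clarify)
    fix a b assume ab: "(a,b) \<in> set (cuts t)"
    show "(\<Sum>(x,y)\<leftarrow>deltaList b. g a x y)
      = (if a \<noteq> [] \<and> b \<noteq> [] then pairH (\<Phi> a) X * pairH (cut_top_sum \<Phi> P (hd b)) Y else 0)"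
    proof (cases "a \<noteq> [] \<and> b \<noteq> []")
      case True
      then have "b = [hd b]" using admissible_cut_root_single[OF ab] by simp
      then have "deltaList b = cuts (hd b)" by (metis deltaList_single)
      then have "(\<Sum>(x,y)\<leftarrow>deltaList b. g a x y) = (\<Sum>(x,y)\<leftarrow>cuts (hd b).
          if x \<noteq> [] \<and> y \<noteq> [] then pairH (\<Phi> a) X * pairH (topH (\<Phi> x) (P (hd y))) Y else 0)"
        using True by (simp add: g_def)
      also have "\<dots> = pairH (\<Phi> a) X * pairH (cut_top_sum \<Phi> P (hd b)) Y"
        by (simp add: pairH_cut_top_sum[OF fsF fsP] split_def sum_list_distrib mult_if_zero)
      finally show ?thesis using True by simp
    qed (auto simp: g_def split_def intro!: sum_list_zero')
  qed
  finally show ?thesis .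
qed

lemma sum_admissible_tree_split:
  fixes \<Phi> :: "'d forest \<Rightarrow> 'd hvec" and P :: "'d ptree \<Rightarrow> 'd hvec"
  assumes fsF: "\<And>F. fin_supp (\<Phi> F)" and fsP: "\<And>s. fin_supp (P s)"
    and Ps: "\<And>s. nv s < nv t \<Longrightarrow> prim (P s) \<and> \<Phi> [s] = (\<lambda>G. cut_top_sum \<Phi> P s G + P s G)"
  shows "(\<Sum>(a,b)\<leftarrow>cuts t. if a \<noteq> [] \<and> b \<noteq> [] then pairH (\<Phi> a) X * pairH (P (hd b)) Y else 0)
    + (\<Sum>(a,b)\<leftarrow>cuts t. if a \<noteq> [] \<and> b \<noteq> [] then pairH (\<Phi> a) X * pairH (cut_top_sum \<Phi> P (hd b)) Y else 0)
    = (\<Sum>(a,b)\<leftarrow>cuts t. if a \<noteq> [] \<and> b \<noteq> [] then pairH (\<Phi> a) X * pairH (\<Phi> b) Y else 0)"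
  unfolding sum_list_addf[symmetric] split_def
proof (rule sum_map_cong)
  fix ab assume ab: "ab \<in> set (cuts t)"
  show "(if fst ab \<noteq> [] \<and> snd ab \<noteq> [] then pairH (\<Phi> (fst ab)) X * pairH (P (hd (snd ab))) Y else 0)
      + (if fst ab \<noteq> [] \<and> snd ab \<noteq> [] then pairH (\<Phi> (fst ab)) X * pairH (cut_top_sum \<Phi> P (hd (snd ab))) Y else 0)
    = (if fst ab \<noteq> [] \<and> snd ab \<noteq> [] then pairH (\<Phi> (fst ab)) X * pairH (\<Phi> (snd ab)) Y else 0)"
  proof (cases "fst ab \<noteq> [] \<and> snd ab \<noteq> []")
    case True
    with admissible_cut_smaller[of "fst ab" "snd ab" t] admissible_cut_root_single[of "fst ab" "snd ab" t] ab
    have "\<Phi> (snd ab) = (\<lambda>G. cut_top_sum \<Phi> P (hd (snd ab)) G + P (hd (snd ab)) G)"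
      using Ps by (metis prod.collapse)
    then have "pairH (\<Phi> (snd ab)) Y = pairH (cut_top_sum \<Phi> P (hd (snd ab))) Y + pairH (P (hd (snd ab))) Y"
      using pairH_add[OF fin_supp_cut_top_sum[OF fsF fsP] fsP] by simp
    then show ?thesis using True by (simp add: distrib_left)
  next
    case False
    then show ?thesis by (simp only: if_not_P[OF False] if_False add.left_neutral)
  qed
qed

lemma pairH_cut_top_sum_append:
  fixes \<Phi> :: "'d forest \<Rightarrow> 'd hvec" and P :: "'d ptree \<Rightarrow> 'd hvec"
  assumes fsF: "\<And>F. fin_supp (\<Phi> F)" and fsP: "\<And>s. fin_supp (P s)"
    and Phi0: "\<Phi> [] = unitH"
    and cnt: "\<And>F. F \<noteq> [] \<Longrightarrow> nvF F < nv t \<Longrightarrow> pairH (\<Phi> F) [] = 0"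
    and cb: "\<And>F. nvF F < nv t \<Longrightarrow> coprod_compat \<Phi> F"
    and Ps: "\<And>s. nv s < nv t \<Longrightarrow> prim (P s) \<and> \<Phi> [s] = (\<lambda>G. cut_top_sum \<Phi> P s G + P s G)"
  shows "pairH (cut_top_sum \<Phi> P t) (X@Y) = pairH (cut_top_sum \<Phi> P t) X * (if Y = [] then 1 else 0)
     + (if X = [] then 1 else 0) * pairH (cut_top_sum \<Phi> P t) Y
     + (\<Sum>(a,b)\<leftarrow>cuts t. if a \<noteq> [] \<and> b \<noteq> [] then pairH (\<Phi> a) X * pairH (\<Phi> b) Y else 0)"
proof -
  note cXt = pairH_cut_top_sum[OF fsF fsP]
  have adm: "nvF a < nv t" "nvF b < nv t" "nv (hd b) < nv t" "b = [hd b]"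
    if "(a,b) \<in> set (cuts t)" "a \<noteq> []" "b \<noteq> []" for a b
    using admissible_cut_smaller[OF that] admissible_cut_root_single[OF that(1,3)] by simp_all
  show ?thesis
  proof (cases "Y = []")
    case True
    have "pairH (cut_top_sum \<Phi> P t) [] = 0" by (rule pairH_cut_top_sum_Nil[OF fsF fsP])
    moreover have "(\<Sum>(a,b)\<leftarrow>cuts t. if a \<noteq> [] \<and> b \<noteq> [] then pairH (\<Phi> a) X * pairH (\<Phi> b) [] else 0) = 0"
    proof (rule sum_list_zero', clarify)
      fix a b assume "(a,b) \<in> set (cuts t)"
      then show "(if a \<noteq> [] \<and> b \<noteq> [] then pairH (\<Phi> a) X * pairH (\<Phi> b) [] else 0) = 0"
        using adm[of a b] cnt[of b] by (cases "a \<noteq> [] \<and> b \<noteq> []") auto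
    qed
    ultimately show ?thesis using True by (simp cong: if_cong)
  next
    case False
    let ?c = "if X = [] then 1 else 0 :: rat"
    define inner where "inner a b = (\<Sum>(x,y)\<leftarrow>deltaList a.
      if x \<noteq> [] \<and> y \<noteq> [] then pairH (\<Phi> x) X * pairH (topH (\<Phi> y) (P (hd b))) Y else 0)" for a b
    define A where "A a b = (if a \<noteq> [] \<and> b \<noteq> [] then ?c * pairH (topH (\<Phi> a) (P (hd b))) Y else 0)" for a b
    define B where "B a b = (if a \<noteq> [] \<and> b \<noteq> [] then pairH (\<Phi> a) X * pairH (P (hd b)) Y else 0)" for a b
    define C where "C a b = (if a \<noteq> [] \<and> b \<noteq> [] then inner a b else 0)" for a b
    have "pairH (cut_top_sum \<Phi> P t) (X@Y) = (\<Sum>(a,b)\<leftarrow>cuts t. A a b + B a b + C a b)"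
      unfolding cXt split_def
    proof (rule sum_map_cong)
      fix ab assume ab: "ab \<in> set (cuts t)"
      show "(if fst ab \<noteq> [] \<and> snd ab \<noteq> [] then pairH (topH (\<Phi> (fst ab)) (P (hd (snd ab)))) (X @ Y) else 0)
        = A (fst ab) (snd ab) + B (fst ab) (snd ab) + C (fst ab) (snd ab)"
      proof (cases "fst ab \<noteq> [] \<and> snd ab \<noteq> []")
        case True
        with adm[of "fst ab" "snd ab"] ab
        have "coprod_compat \<Phi> (fst ab)" "prim (P (hd (snd ab)))" using cb Ps by simp_all
        from pairH_topH_append[where \<Phi>=\<Phi>, OF fsF Phi0 this True[THEN conjunct1] False]
        show ?thesis using True by (simp add: A_def B_def C_def inner_def)
      next
        case False
        then show ?thesis by (simp only: A_def B_def C_def if_not_P[OF False] if_False add.left_neutral)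
      qed
    qed
    also have "\<dots> = (\<Sum>(a,b)\<leftarrow>cuts t. A a b) + ((\<Sum>(a,b)\<leftarrow>cuts t. B a b) + (\<Sum>(a,b)\<leftarrow>cuts t. C a b))"
      by (simp add: split_def sum_list_addf add.assoc)
    also have "(\<Sum>(a,b)\<leftarrow>cuts t. A a b) = ?c * pairH (cut_top_sum \<Phi> P t) Y"
      by (simp add: A_def cXt split_def sum_list_const_mult[symmetric] mult_if_zero)
    also have "(\<Sum>(a,b)\<leftarrow>cuts t. C a b)
        = (\<Sum>(a,b)\<leftarrow>cuts t. if a \<noteq> [] \<and> b \<noteq> [] then pairH (\<Phi> a) X * pairH (cut_top_sum \<Phi> P (hd b)) Y else 0)"
      unfolding C_def inner_def by (rule sum_admissible_topH_regroup[OF fsF fsP])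
    also have "(\<Sum>(a,b)\<leftarrow>cuts t. B a b) + \<dots>
        = (\<Sum>(a,b)\<leftarrow>cuts t. if a \<noteq> [] \<and> b \<noteq> [] then pairH (\<Phi> a) X * pairH (\<Phi> b) Y else 0)"
      unfolding B_def by (rule sum_admissible_tree_split[OF fsF fsP Ps])
    finally show ?thesis using False by simp
  qed
qed

lemma sum_cuts_split:
  fixes f :: "'d forest \<times> 'd forest \<Rightarrow> rat"
  shows "(\<Sum>ab\<leftarrow>cuts t. f ab) = f ([t],[]) + f ([],[t]) + (\<Sum>ab\<leftarrow>cuts t. if fst ab \<noteq> [] \<and> snd ab \<noteq> [] then f ab else 0)"
proof -
  have "(\<Sum>ab\<leftarrow>cuts t. f ab) = (\<Sum>ab\<leftarrow>cuts t. (if snd ab = [] then f ab else 0) + (if fst ab = [] then f ab else 0)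
      + (if fst ab \<noteq> [] \<and> snd ab \<noteq> [] then f ab else 0))"
  proof (rule sum_map_cong)
    fix ab assume ab: "ab \<in> set (cuts t)"
    have "\<not> (fst ab = [] \<and> snd ab = [])" using cuts_nv[OF ab] nv_pos[of t] by auto
    then show "f ab = (if snd ab = [] then f ab else 0) + (if fst ab = [] then f ab else 0)
      + (if fst ab \<noteq> [] \<and> snd ab \<noteq> [] then f ab else 0)" by auto
  qed
  also have "\<dots> = (\<Sum>ab\<leftarrow>cuts t. if snd ab = [] then f ab else 0) + (\<Sum>ab\<leftarrow>cuts t. if fst ab = [] then f ab else 0)
      + (\<Sum>ab\<leftarrow>cuts t. if fst ab \<noteq> [] \<and> snd ab \<noteq> [] then f ab else 0)"
    by (simp add: sum_list_addf)
  also have "(\<Sum>ab\<leftarrow>cuts t. if snd ab = [] then f ab else 0) = (\<Sum>ab\<leftarrow>cuts t. if snd ab = [] then f (fst ab, []) else 0)"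
    by (rule sum_map_cong) (auto simp: prod_eq_iff)
  also have "\<dots> = f ([t],[])"
    using sum_deltaList_right_Nil[of "\<lambda>a. f (a,[])" "[t]"] by (simp add: deltaList_single split_def)
  also have "(\<Sum>ab\<leftarrow>cuts t. if fst ab = [] then f ab else 0) = (\<Sum>ab\<leftarrow>cuts t. if fst ab = [] then f ([], snd ab) else 0)"
    by (rule sum_map_cong) (auto simp: prod_eq_iff)
  also have "\<dots> = f ([],[t])"
    using sum_deltaList_left_Nil[of "\<lambda>b. f ([],b)" "[t]"] by (simp add: deltaList_single split_def)
  finally show ?thesis .
qed

lemma fin_supp_cut_top_sum_below:
  assumes "\<And>F. nvF F < nv t \<Longrightarrow> fin_supp (\<Phi> F)" "\<And>s. nv s < nv t \<Longrightarrow> fin_supp (P s)"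
  shows "fin_supp (cut_top_sum \<Phi> P t)"
  unfolding cut_top_sum_def
proof (rule fin_supp_sum_list)
  fix ab assume ab: "ab \<in> set (cuts t)"
  show "fin_supp (\<lambda>G. if fst ab \<noteq> [] \<and> snd ab \<noteq> [] then topH (\<Phi> (fst ab)) (P (hd (snd ab))) G else 0)"
  proof (cases "fst ab \<noteq> [] \<and> snd ab \<noteq> []")
    case True
    then have "nv (hd (snd ab)) < nv t \<and> nvF (fst ab) < nv t" using admissible_cut_smaller[of "fst ab" "snd ab" t] ab by simp
    then show ?thesis using True assms by (auto intro!: fin_supp_topH)
  next
    case False
    show ?thesis by (simp only: if_not_P[OF False] fin_supp_zero)
  qed
qed

lemma cut_top_sum_cong:
  assumes "\<And>F. nvF F < nv t \<Longrightarrow> \<Phi> F = \<Phi>' F" "\<And>s. nv s < nv t \<Longrightarrow> P s = P' s"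
  shows "cut_top_sum \<Phi> P t = cut_top_sum \<Phi>' P' t"
  unfolding cut_top_sum_def
proof (intro ext arg_cong[where f=sum_list] map_cong refl)
  fix G ab assume ab: "ab \<in> set (cuts t)"
  show "(if fst ab \<noteq> [] \<and> snd ab \<noteq> [] then topH (\<Phi> (fst ab)) (P (hd (snd ab))) G else 0) =
        (if fst ab \<noteq> [] \<and> snd ab \<noteq> [] then topH (\<Phi>' (fst ab)) (P' (hd (snd ab))) G else 0)"
    using admissible_cut_smaller[of "fst ab" "snd ab" t] ab assms by auto
qed

lemma coprod_compat_Nil: "\<Phi> [] = unitH \<Longrightarrow> coprod_compat \<Phi> []"
  by (simp add: coprod_compat_def pairH_unitH)

lemma coprod_compat_tree_iff_prim:
  fixes \<Phi> :: "'d forest \<Rightarrow> 'd hvec" and P :: "'d ptree \<Rightarrow> 'd hvec"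
  assumes fsF: "\<And>F. fin_supp (\<Phi> F)" and fsP: "\<And>s. fin_supp (P s)"
    and Phi0: "\<Phi> [] = unitH"
    and cnt: "\<And>F. F \<noteq> [] \<Longrightarrow> nvF F < nv t \<Longrightarrow> pairH (\<Phi> F) [] = 0"
    and cb: "\<And>F. nvF F < nv t \<Longrightarrow> coprod_compat \<Phi> F"
    and Ps: "\<And>s. nv s < nv t \<Longrightarrow> prim (P s) \<and> \<Phi> [s] = (\<lambda>G. cut_top_sum \<Phi> P s G + P s G)"
    and Pt: "\<Phi> [t] = (\<lambda>G. cut_top_sum \<Phi> P t G + P t G)"
  shows "coprod_compat \<Phi> [t] \<longleftrightarrow> prim (P t)"
proof -
  have fXt: "fin_supp (cut_top_sum \<Phi> P t)" by (rule fin_supp_cut_top_sum[OF fsF fsP])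
  have cPhit: "pairH (\<Phi> [t]) W = pairH (cut_top_sum \<Phi> P t) W + pairH (P t) W" for W
    unfolding Pt by (rule pairH_add[OF fXt fsP])
  have K: "pairH (cut_top_sum \<Phi> P t) (X@Y) = pairH (cut_top_sum \<Phi> P t) X * (if Y = [] then 1 else 0)
     + (if X = [] then 1 else 0) * pairH (cut_top_sum \<Phi> P t) Y
     + (\<Sum>(a,b)\<leftarrow>cuts t. if a \<noteq> [] \<and> b \<noteq> [] then pairH (\<Phi> a) X * pairH (\<Phi> b) Y else 0)" for X Y
    by (rule pairH_cut_top_sum_append[OF fsF fsP Phi0 cnt cb Ps])
  have R: "(\<Sum>ab\<leftarrow>deltaList [t]. pairH (\<Phi> (fst ab)) X * pairH (\<Phi> (snd ab)) Y)
     = pairH (\<Phi> [t]) X * (if Y = [] then 1 else 0) + (if X = [] then 1 else 0) * pairH (\<Phi> [t]) Y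
     + (\<Sum>(a,b)\<leftarrow>cuts t. if a \<noteq> [] \<and> b \<noteq> [] then pairH (\<Phi> a) X * pairH (\<Phi> b) Y else 0)" for X Y
    unfolding deltaList_single sum_cuts_split[of "\<lambda>ab. pairH (\<Phi> (fst ab)) X * pairH (\<Phi> (snd ab)) Y"]
    by (simp add: Phi0 pairH_unitH split_def)
  have "coprod_compat \<Phi> [t] \<longleftrightarrow> (\<forall>X Y. pairH (P t) (X@Y) = pairH (P t) X * (if Y = [] then 1 else 0) + (if X = [] then 1 else 0) * pairH (P t) Y)"
    unfolding coprod_compat_def R cPhit K by (auto simp: algebra_simps)
  also have "\<dots> \<longleftrightarrow> prim (P t)" using fsP by (simp add: prim_iff_pairH)
  finally show ?thesis .
qed

lemma sum_list_swap4:
  fixes f :: "'a \<Rightarrow> 'b \<Rightarrow> 'c \<Rightarrow> 'e \<Rightarrow> 'r::comm_monoid_add"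
  shows "(\<Sum>x\<leftarrow>X. \<Sum>y\<leftarrow>Y. \<Sum>b\<leftarrow>B. \<Sum>a\<leftarrow>A. f x y b a) = (\<Sum>a\<leftarrow>A. \<Sum>b\<leftarrow>B. \<Sum>x\<leftarrow>X. \<Sum>y\<leftarrow>Y. f x y b a)"
proof -
  have 1: "(\<Sum>y\<leftarrow>Y. \<Sum>b\<leftarrow>B. \<Sum>a\<leftarrow>A. f x y b a) = (\<Sum>b\<leftarrow>B. \<Sum>a\<leftarrow>A. \<Sum>y\<leftarrow>Y. f x y b a)" for x
  proof -
    have "(\<Sum>y\<leftarrow>Y. \<Sum>b\<leftarrow>B. \<Sum>a\<leftarrow>A. f x y b a) = (\<Sum>b\<leftarrow>B. \<Sum>y\<leftarrow>Y. \<Sum>a\<leftarrow>A. f x y b a)"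
      by (rule sum_list_swap)
    also have "\<dots> = (\<Sum>b\<leftarrow>B. \<Sum>a\<leftarrow>A. \<Sum>y\<leftarrow>Y. f x y b a)"
      by (rule sum_map_cong, rule sum_list_swap)
    finally show ?thesis .
  qed
  have "(\<Sum>x\<leftarrow>X. \<Sum>y\<leftarrow>Y. \<Sum>b\<leftarrow>B. \<Sum>a\<leftarrow>A. f x y b a) = (\<Sum>x\<leftarrow>X. \<Sum>b\<leftarrow>B. \<Sum>a\<leftarrow>A. \<Sum>y\<leftarrow>Y. f x y b a)"
    by (rule sum_map_cong, rule 1)
  also have "\<dots> = (\<Sum>b\<leftarrow>B. \<Sum>x\<leftarrow>X. \<Sum>a\<leftarrow>A. \<Sum>y\<leftarrow>Y. f x y b a)"
    by (rule sum_list_swap)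
  also have "\<dots> = (\<Sum>b\<leftarrow>B. \<Sum>a\<leftarrow>A. \<Sum>x\<leftarrow>X. \<Sum>y\<leftarrow>Y. f x y b a)"
    by (rule sum_map_cong, rule sum_list_swap)
  also have "\<dots> = (\<Sum>a\<leftarrow>A. \<Sum>b\<leftarrow>B. \<Sum>x\<leftarrow>X. \<Sum>y\<leftarrow>Y. f x y b a)"
    by (rule sum_list_swap)
  finally show ?thesis .
qed

lemma coprod_compat_append:
  assumes fs: "\<And>F. fin_supp (\<Phi> F)" and mult: "\<And>A B. \<Phi> (A@B) = multH (\<Phi> A) (\<Phi> B)"
    and cA: "coprod_compat \<Phi> A" and cB: "coprod_compat \<Phi> B"
  shows "coprod_compat \<Phi> (A@B)"
  unfolding coprod_compat_def
proof (intro allI)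
  fix X Y
  let ?c = "\<lambda>F W. pairH (\<Phi> F) W"
  have "pairH (\<Phi> (A@B)) (X@Y) = (\<Sum>(u1,v1)\<leftarrow>deltaList X. \<Sum>(u2,v2)\<leftarrow>deltaList Y. ?c A (u1@u2) * ?c B (v1@v2))"
    by (simp add: mult pairH_multH fs deltaList_append sum_list_tensor_list split_def)
  also have "\<dots> = (\<Sum>(u1,v1)\<leftarrow>deltaList X. \<Sum>(u2,v2)\<leftarrow>deltaList Y. \<Sum>(a2,b2)\<leftarrow>deltaList B. \<Sum>(a1,b1)\<leftarrow>deltaList A.
        ?c a1 u1 * ?c b1 u2 * (?c a2 v1 * ?c b2 v2))"
    using cA cB by (simp add: coprod_compat_def split_def sum_list_distrib)
  also have "\<dots> = (\<Sum>(a1,b1)\<leftarrow>deltaList A. \<Sum>(a2,b2)\<leftarrow>deltaList B. \<Sum>(u2,v2)\<leftarrow>deltaList Y. \<Sum>(u1,v1)\<leftarrow>deltaList X.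
        ?c a1 u1 * ?c a2 v1 * (?c b1 u2 * ?c b2 v2))"
    unfolding split_def
    by (subst sum_list_swap4, intro sum_map_cong, subst sum_list_swap, intro sum_map_cong) (simp add: mult_ac)
  also have "\<dots> = (\<Sum>(a1,b1)\<leftarrow>deltaList A. \<Sum>(a2,b2)\<leftarrow>deltaList B. ?c (a1@a2) X * ?c (b1@b2) Y)"
    by (simp add: mult pairH_multH fs split_def sum_list_distrib)
  also have "\<dots> = (\<Sum>ab\<leftarrow>deltaList (A@B). ?c (fst ab) X * ?c (snd ab) Y)"
    by (simp add: deltaList_append sum_list_tensor_list split_def)
  finally show "pairH (\<Phi> (A@B)) (X@Y) = (\<Sum>ab\<leftarrow>deltaList (A@B). pairH (\<Phi> (fst ab)) X * pairH (\<Phi> (snd ab)) Y)" .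
qed

lemma deltaH_hom_iff_coprod_compat:
  assumes fs: "\<And>F. fin_supp (\<Phi> F)"
  shows "deltaH (\<Phi> F) = (\<lambda>(C, D). sum_list (map (\<lambda>ab. \<Phi> (fst ab) C * \<Phi> (snd ab) D) (deltaList F)))
     \<longleftrightarrow> coprod_compat \<Phi> F"
proof -
  have e: "(\<lambda>(C, D). sum_list (map (\<lambda>ab. \<Phi> (fst ab) C * \<Phi> (snd ab) D) (deltaList F)))
     = (\<lambda>CD. \<Sum>i\<leftarrow>deltaList F. (\<lambda>ab. \<Phi> (fst ab)) i (fst CD) * (\<lambda>ab. \<Phi> (snd ab)) i (snd CD))"
    by (simp add: split_def)
  show ?thesis unfolding e coprod_compat_def
    by (rule deltaH_tensor_iff) (use fs in auto)
qed

section \<open>phiF is a bialgebra endomorphism\<close>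

lemma phiF_Cons_cut_top_sum: "phiF P (t # F) = multH (\<lambda>G. cut_top_sum (phiF P) P t G + P t G) (phiF P F)"
  by (simp add: cut_top_sum_def)

lemma fin_supp_phiF:
  assumes fsP: "\<And>s. fin_supp (P s)"
  shows "fin_supp (phiF P F)"
proof (induction F rule: nvF_less_induct)
  case (1 F)
  show ?case
  proof (cases F)
    case Nil then show ?thesis by simp
  next
    case (Cons t F')
    have "fin_supp (cut_top_sum (phiF P) P t)"
      by (rule fin_supp_cut_top_sum_below) (use 1 Cons fsP in auto)
    then have "fin_supp (\<lambda>G. cut_top_sum (phiF P) P t G + P t G)" using fsP by (rule fin_supp_add)
    moreover have "fin_supp (phiF P F')" using 1 Cons by (simp add: nv_pos)
    ultimately show ?thesis unfolding Cons phiF_Cons_cut_top_sum by (rule fin_supp_multH)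
  qed
qed

lemma phiF_single:
  assumes fsP: "\<And>s. fin_supp (P s)"
  shows "phiF P [t] = (\<lambda>G. cut_top_sum (phiF P) P t G + P t G)"
proof -
  have "fin_supp (\<lambda>G. cut_top_sum (phiF P) P t G + P t G)"
    using fin_supp_cut_top_sum[OF fin_supp_phiF[OF fsP] fsP] fsP by (rule fin_supp_add)
  then show ?thesis unfolding phiF_Cons_cut_top_sum by (simp add: multH_unit_right)
qed

lemma phiF_mult:
  assumes fsP: "\<And>s. fin_supp (P s)"
  shows "phiF P (F @ G) = multH (phiF P F) (phiF P G)"
proof (induction F)
  case Nil then show ?case by (simp add: multH_unit_left fin_supp_phiF[OF fsP])
next
  case (Cons t F)
  have fx: "fin_supp (\<lambda>G. cut_top_sum (phiF P) P t G + P t G)"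
    using fin_supp_cut_top_sum[OF fin_supp_phiF[OF fsP] fsP] fsP by (rule fin_supp_add)
  show ?case unfolding append_Cons phiF_Cons_cut_top_sum Cons
    by (rule multH_assoc[symmetric]) (use fx fin_supp_phiF[OF fsP] in auto)
qed

lemma pairH_multH_Nil:
  "fin_supp x \<Longrightarrow> fin_supp y \<Longrightarrow> pairH (multH x y) [] = pairH x [] * pairH y []"
  by (simp add: pairH_multH)

lemma pairH_phiF_Nil:
  assumes pr: "\<And>s. prim (P s)" and "F \<noteq> []"
  shows "pairH (phiF P F) [] = 0"
proof -
  have fsP: "\<And>s. fin_supp (P s)" using pr by (simp add: prim_fin_supp)
  obtain t F' where F: "F = t # F'" using assms(2) by (cases F) auto
  have fX: "fin_supp (cut_top_sum (phiF P) P t)" by (rule fin_supp_cut_top_sum[OF fin_supp_phiF[OF fsP] fsP])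
  have "pairH (cut_top_sum (phiF P) P t) [] = 0"
    by (rule pairH_cut_top_sum_Nil[OF fin_supp_phiF[OF fsP] fsP])
  moreover have "pairH (P t) [] = 0" by (rule prim_pairH_Nil[OF pr])
  ultimately have "pairH (\<lambda>G. cut_top_sum (phiF P) P t G + P t G) [] = 0"
    by (simp add: pairH_add[OF fX fsP])
  then show ?thesis unfolding F phiF_Cons_cut_top_sum
    by (simp add: pairH_multH_Nil fin_supp_add[OF fX fsP] fin_supp_phiF[OF fsP])
qed

lemma coprod_compat_phiF:
  assumes pr: "\<And>s. prim (P s)"
  shows "coprod_compat (phiF P) F"
proof (induction F rule: nvF_less_induct)
  case (1 F)
  have fsP: "\<And>s. fin_supp (P s)" using pr by (rule prim_fin_supp)
  show ?case
  proof (cases F)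
    case Nil then show ?thesis by (simp add: coprod_compat_Nil)
  next
    case (Cons t F')
    have "coprod_compat (phiF P) [t] \<longleftrightarrow> prim (P t)"
    proof (rule coprod_compat_tree_iff_prim)
      show "fin_supp (phiF P F)" for F using fsP by (rule fin_supp_phiF)
      show "fin_supp (P s)" for s by (rule fsP)
      show "pairH (phiF P F) [] = 0" if "F \<noteq> []" for F using pr that by (rule pairH_phiF_Nil)
      show "coprod_compat (phiF P) G" if "nvF G < nv t" for G using 1 Cons that by simp
      show "prim (P s) \<and> phiF P [s] = (\<lambda>G. cut_top_sum (phiF P) P s G + P s G)" for s
        by (intro conjI pr phiF_single[OF fsP])
      show "phiF P [t] = (\<lambda>G. cut_top_sum (phiF P) P t G + P t G)" by (rule phiF_single[OF fsP])
    qed simp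
    with pr have "coprod_compat (phiF P) [t]" by blast
    moreover have "coprod_compat (phiF P) F'" using 1 Cons by (simp add: nv_pos)
    ultimately have "coprod_compat (phiF P) ([t] @ F')"
      by (rule coprod_compat_append[OF fin_supp_phiF[OF fsP] phiF_mult[OF fsP]])
    then show ?thesis using Cons by simp
  qed
qed

lemma bialg_endo_phiF:
  assumes pr: "\<And>t. prim (P t)"
  shows "bialg_endo (phiF P)"
proof -
  have fsP: "\<And>s. fin_supp (P s)" using pr by (simp add: prim_fin_supp)
  show ?thesis unfolding bialg_endo_def
  proof (intro conjI allI)
    show "\<And>F. fin_supp (phiF P F)" by (rule fin_supp_phiF[OF fsP])
    show "phiF P [] = unitH" by simp
    show "\<And>F G. phiF P (F @ G) = multH (phiF P F) (phiF P G)" by (rule phiF_mult[OF fsP])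
    fix F
    show "deltaH (phiF P F) = (\<lambda>(C, D). \<Sum>ab\<leftarrow>deltaList F. phiF P (fst ab) C * phiF P (snd ab) D)"
      by (rule deltaH_hom_iff_coprod_compat[where \<Phi>="phiF P", OF fin_supp_phiF[OF fsP], THEN iffD2, OF coprod_compat_phiF[OF pr]])
    show "counitH (phiF P F) = (if F = [] then 1 else 0)"
    proof (cases "F = []")
      case True then show ?thesis by (simp add: counitH_def unitH_def)
    next
      case False
      then show ?thesis using pairH_phiF_Nil[OF pr False] pairH_Nil[OF fin_supp_phiF[OF fsP]]
        by (simp add: counitH_def)
    qed
  qed
qed

section \<open>Bialgebra endomorphisms come from primitive families\<close>

lemma admissible_cut_hd_smaller: "ab \<in> set (cuts t) \<Longrightarrow> fst ab \<noteq> [] \<and> snd ab \<noteq> [] \<Longrightarrow> nv (hd (snd ab)) < nv t"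
  using admissible_cut_smaller[of "fst ab" "snd ab" t] by simp

text \<open>The recursion defining phiF, solved for P.\<close>

function prim_family :: "('d forest \<Rightarrow> 'd hvec) \<Rightarrow> 'd ptree \<Rightarrow> 'd hvec" where
  "prim_family \<Phi> t = (\<lambda>G. \<Phi> [t] G - sum_list (map (\<lambda>ab. if fst ab \<noteq> [] \<and> snd ab \<noteq> []
       then topH (\<Phi> (fst ab)) (prim_family \<Phi> (hd (snd ab))) G else 0) (cuts t)))"
  by pat_completeness auto
termination by (relation "measure (\<lambda>(\<Phi>, t). nv t)") (auto dest: admissible_cut_hd_smaller)

declare prim_family.simps[simp del]

lemma prim_family_eq: "prim_family \<Phi> t = (\<lambda>G. \<Phi> [t] G - cut_top_sum \<Phi> (prim_family \<Phi>) t G)"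
  by (subst prim_family.simps) (simp add: cut_top_sum_def)

lemma tree_eq_cut_top_sum_prim_family:
  "\<Phi> [t] = (\<lambda>G. cut_top_sum \<Phi> (prim_family \<Phi>) t G + prim_family \<Phi> t G)"
  by (subst prim_family_eq) simp

lemma fin_supp_prim_family:
  assumes "\<And>F. fin_supp (\<Phi> F)"
  shows "fin_supp (prim_family \<Phi> t)"
proof (induction t rule: measure_induct_rule[of nv])
  case (less t)
  have "fin_supp (cut_top_sum \<Phi> (prim_family \<Phi>) t)"
    by (rule fin_supp_cut_top_sum_below) (use assms less in auto)
  then show ?case
    by (subst prim_family_eq) (simp add: fin_supp_diff assms)
qed

lemma bialg_endo_fin_supp: "bialg_endo \<Phi> \<Longrightarrow> fin_supp (\<Phi> F)"
  by (simp add: bialg_endo_def)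

lemma bialg_endo_coprod_compat: "bialg_endo \<Phi> \<Longrightarrow> coprod_compat \<Phi> F"
  using deltaH_hom_iff_coprod_compat[of \<Phi> F] by (simp add: bialg_endo_def)

lemma bialg_endo_pairH_Nil: "bialg_endo \<Phi> \<Longrightarrow> F \<noteq> [] \<Longrightarrow> pairH (\<Phi> F) [] = 0"
  by (simp add: bialg_endo_def pairH_Nil counitH_def)

lemma prim_prim_family:
  assumes bi: "bialg_endo \<Phi>"
  shows "prim (prim_family \<Phi> t)"
proof (induction t rule: measure_induct_rule[of nv])
  case (less t)
  have "coprod_compat \<Phi> [t] \<longleftrightarrow> prim (prim_family \<Phi> t)"
  proof (rule coprod_compat_tree_iff_prim)
    show "fin_supp (\<Phi> F)" for F using bi by (rule bialg_endo_fin_supp)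
    then show "fin_supp (prim_family \<Phi> s)" for s by (rule fin_supp_prim_family)
    show "\<Phi> [] = unitH" using bi by (simp add: bialg_endo_def)
    show "pairH (\<Phi> F) [] = 0" if "F \<noteq> []" for F using bi that by (rule bialg_endo_pairH_Nil)
    show "coprod_compat \<Phi> F" for F using bi by (rule bialg_endo_coprod_compat)
    show "prim (prim_family \<Phi> s) \<and> \<Phi> [s] = (\<lambda>G. cut_top_sum \<Phi> (prim_family \<Phi>) s G + prim_family \<Phi> s G)"
      if "nv s < nv t" for s using less that by (simp add: tree_eq_cut_top_sum_prim_family)
  qed (rule tree_eq_cut_top_sum_prim_family)
  then show ?case using bi by (simp add: bialg_endo_coprod_compat)
qed

lemma bialg_endo_eq_phiF_prim_family:
  assumes bi: "bialg_endo \<Phi>"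
  shows "\<Phi> F = phiF (prim_family \<Phi>) F"
proof (induction F rule: nvF_less_induct)
  case (1 F)
  show ?case
  proof (cases F)
    case Nil then show ?thesis using bi by (simp add: bialg_endo_def)
  next
    case (Cons t F')
    let ?P = "prim_family \<Phi>"
    have "cut_top_sum (phiF ?P) ?P t = cut_top_sum \<Phi> ?P t"
      by (rule cut_top_sum_cong) (use 1 Cons in auto)
    then have "\<Phi> [t] = (\<lambda>G. cut_top_sum (phiF ?P) ?P t G + ?P t G)"
      by (simp add: tree_eq_cut_top_sum_prim_family[symmetric])
    moreover have "\<Phi> F' = phiF ?P F'" using 1 Cons by (simp add: nv_pos)
    moreover have "\<Phi> (t # F') = multH (\<Phi> [t]) (\<Phi> F')"
      using bi unfolding bialg_endo_def by (metis append_Cons append_Nil)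
    ultimately show ?thesis unfolding Cons phiF_Cons_cut_top_sum by (simp only:)
  qed
qed

lemma prim_family_phiF:
  assumes "\<And>t. fin_supp (P t)"
  shows "prim_family (phiF P) = P"
proof
  fix t show "prim_family (phiF P) t = P t"
  proof (induction t rule: measure_induct_rule[of nv])
    case (less t)
    have eq: "cut_top_sum (phiF P) (prim_family (phiF P)) t = cut_top_sum (phiF P) P t"
      by (rule cut_top_sum_cong) (use less in auto)
    show ?case
      unfolding prim_family_eq[of "phiF P" t] eq phiF_single[OF assms] by simp
  qed
qed

theorem mainTheorem15:
  shows "(\<forall>P :: 'd ptree \<Rightarrow> 'd hvec. (\<forall>t. prim (P t)) \<longrightarrow> bialg_endo (phiF P)) \<and>
         (\<forall>\<Phi> :: 'd forest \<Rightarrow> 'd hvec. bialg_endo \<Phi> \<longrightarrow>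
             (\<exists>!P :: 'd ptree \<Rightarrow> 'd hvec. (\<forall>t. prim (P t)) \<and> \<Phi> = phiF P))"
proof (intro conjI allI impI)
  fix P :: "'d ptree \<Rightarrow> 'd hvec"
  assume "\<forall>t. prim (P t)"
  then show "bialg_endo (phiF P)" by (simp add: bialg_endo_phiF)
next
  fix \<Phi> :: "'d forest \<Rightarrow> 'd hvec"
  assume bi: "bialg_endo \<Phi>"
  show "\<exists>!P. (\<forall>t. prim (P t)) \<and> \<Phi> = phiF P"
  proof (rule ex1I[of _ "prim_family \<Phi>"])
    show "(\<forall>t. prim (prim_family \<Phi> t)) \<and> \<Phi> = phiF (prim_family \<Phi>)"
      using bi by (simp add: prim_prim_family bialg_endo_eq_phiF_prim_family fun_eq_iff)
  next
    fix P assume "(\<forall>t. prim (P t)) \<and> \<Phi> = phiF P"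
    then show "P = prim_family \<Phi>" by (simp add: prim_family_phiF prim_fin_supp)
  qed
qed

end
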